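(* Let $(a_1,\dots,a_k)$ be a composition, $d_k=-(a_1+\cdots+a_{k-1})$ and $d_i=(a_1+\cdots+a_{i-1})-(a_{i+1}+\cdots+a_k)$ for $1\le i\le k-1$. For every $1\le i\le k$ with $d_i\neq0$, the meanders $\Gamma(a_1,\dots,a_k)$ and $\Gamma(a_1,\dots,a_{i-1},a_i[|d_i|],a_{i+1},\dots,a_k)$ are equivalent.
   Context: For a composition $\underline a=(a_1,\dots,a_k)$ of $n$, let $I_i=\{a_1+\cdots+a_{i-1}+1,\dots,a_1+\cdots+a_i\}$ and let $\theta_{\underline a}$ be the involution of $\{1,\dots,n\}$ given on $I_i$ by $x\mapsto 2(a_1+\cdots+a_{i-1})+a_i-x+1$; let $\theta(x)=n+1-x$. The meander $\Gamma(\underline a)$ is the graph with vertices $1,\dots,n$ on a horizontal line, with an arc below the line joining $x$ and $\theta_{\underline a}(x)$ whenever $x\ne\theta_{\underline a}(x)$, and an arc above joining $x$ and $\theta(x)$ whenever $x\neq\theta(x)$. Its connected components are the orbits of the group generated by $\theta_{\underline a},\theta$. A component is a cycle if every vertex $x$ in it satisfies $x\ne\theta_{\underline a}(x)$ and $x\ne\theta(x)$, and a segment otherwise. For a cycle $X$ there are an integer $s>1$ (the dimension of $X$) and $x_1,\dots,x_m$ such that the vertices of $X$ are $x_1<x_1+s-1<x_2<x_2+s-1<\cdots<x_m<x_m+s-1$; if $s>2$, a component $Y\neq X$ is said to be inside $X$ if it has a vertex $y$ with $x_j\le y\le x_j+s-1$ for some $j$. A cycle is maximal if it is not inside another cycle;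 a segment not inside any cycle is regarded as a maximal cycle of dimension $1$. Two meanders are equivalent if there is a bijection between their sets of connected components preserving the number of maximal cycles and their dimensions. $r[s]$ is the remainder of the Euclidean division of $r$ by $s$; zero entries in a tuple are deleted. *)

theory Defs
  imports Main
begin

(* Blocks are 0-indexed here: block i (i < k) is I_{i+1} = {p i + 1 .. p i + a!i}
   with p i = a_1 + ... + a_i (0-indexed prefix sum). *)

definition is_composition :: "nat list \<Rightarrow> bool" where
  "is_composition a \<longleftrightarrow> a \<noteq> [] \<and> (\<forall>x\<in>set a. 0 < x)"

definition pre :: "nat list \<Rightarrow> nat \<Rightarrow> nat" where
  "pre a i = sum_list (take i a)"

definition theta_a :: "nat list \<Rightarrow> nat \<Rightarrow> nat" where
  "theta_a a x =
     (if \<exists>i<length a. pre a i < x \<and> x \<le> pre a i + a!i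
      then (let i = (THE i. i < length a \<and> pre a i < x \<and> x \<le> pre a i + a!i)
            in 2 * pre a i + a!i + 1 - x)
      else x)"

definition theta :: "nat \<Rightarrow> nat \<Rightarrow> nat" where
  "theta n x = n + 1 - x"

definition medges :: "nat list \<Rightarrow> (nat \<times> nat) set" where
  "medges a = {(x, y). x \<in> {1..sum_list a} \<and>
                  (y = theta_a a x \<or> y = theta (sum_list a) x)}"

definition mcomp :: "nat list \<Rightarrow> nat \<Rightarrow> nat set" where
  "mcomp a x = {y. (x, y) \<in> (medges a)\<^sup>*}"

definition mcomponents :: "nat list \<Rightarrow> nat set set" where
  "mcomponents a = mcomp a ` {1..sum_list a}"

definition is_cycle :: "nat list \<Rightarrow> nat set \<Rightarrow> bool" where
  "is_cycle a X \<longleftrightarrow> X \<in> mcomponents a \<and>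
     (\<forall>x\<in>X. x \<noteq> theta_a a x \<and> x \<noteq> theta (sum_list a) x)"

definition is_segment :: "nat list \<Rightarrow> nat set \<Rightarrow> bool" where
  "is_segment a X \<longleftrightarrow> X \<in> mcomponents a \<and> \<not> is_cycle a X"

definition cycle_shape :: "nat set \<Rightarrow> nat \<Rightarrow> nat list \<Rightarrow> bool" where
  "cycle_shape X s xs \<longleftrightarrow> 1 < s \<and>
     sorted_wrt (<) (concat (map (\<lambda>x. [x, x + s - 1]) xs)) \<and>
     X = set (concat (map (\<lambda>x. [x, x + s - 1]) xs))"

definition cycle_dim :: "nat set \<Rightarrow> nat" where
  "cycle_dim X = (THE s. \<exists>xs. cycle_shape X s xs)"

definition inside :: "nat list \<Rightarrow> nat set \<Rightarrow> nat set \<Rightarrow> bool" where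
  "inside a Y X \<longleftrightarrow> is_cycle a X \<and> Y \<in> mcomponents a \<and> Y \<noteq> X \<and>
     (\<exists>s xs. cycle_shape X s xs \<and> 2 < s \<and>
        (\<exists>y\<in>Y. \<exists>x\<in>set xs. x \<le> y \<and> y \<le> x + s - 1))"

definition is_maximal_cycle :: "nat list \<Rightarrow> nat set \<Rightarrow> bool" where
  "is_maximal_cycle a X \<longleftrightarrow> is_cycle a X \<and> \<not> (\<exists>Z. inside a X Z)"

(* dimension of a component as a maximal cycle: a maximal cycle has its dimension,
   a segment not inside any cycle counts as a maximal cycle of dimension 1,
   all other components are not maximal cycles (None). *)
definition max_dim :: "nat list \<Rightarrow> nat set \<Rightarrow> nat option" where
  "max_dim a X =
     (if is_maximal_cycle a X then Some (cycle_dim X)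
      else if is_segment a X \<and> \<not> (\<exists>Z. inside a X Z) then Some 1
      else None)"

definition meander_equiv :: "nat list \<Rightarrow> nat list \<Rightarrow> bool" where
  "meander_equiv a b \<longleftrightarrow>
     (\<exists>f. bij_betw f (mcomponents a) (mcomponents b) \<and>
          (\<forall>X\<in>mcomponents a. max_dim b (f X) = max_dim a X))"

(* d_i for 0-indexed i < k:  d_{i+1} of the paper *)
definition dval :: "nat list \<Rightarrow> nat \<Rightarrow> int" where
  "dval a i =
     (if i = length a - 1 then - int (sum_list (take i a))
      else int (sum_list (take i a)) - int (sum_list (drop (Suc i) a)))"

(* (a_1,...,a_{i-1}, a_i[|d_i|], a_{i+1},...,a_k) with zero entries deleted *)
definition reduce_comp :: "nat list \<Rightarrow> nat \<Rightarrow> nat list" where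
  "reduce_comp a i = filter (\<lambda>x. x \<noteq> 0) (a[i := a!i mod nat \<bar>dval a i\<bar>])"

end

(* Write a = l1 @ A # l2 with L = sum_list l1 > R = sum_list l2 and d = L - R \<le> A, and let
   n = L + A + R.  For R < z \<le> L the upper arc joins z to n + 1 - z, which lies in the block
   of A, and the lower arc of that block leads on to z + d; so z and z + d always lie in the same
   component.  Identifying these vertices (fix the blocks of l1, reflect the block of A by
   x \<mapsto> n + 1 - x, shift the blocks of l2 down by d) maps the meander of a onto the meander of
   l1 @ (A - d) # l2 and induces a bijection of components that preserves segments, cycles and
   their shapes.  Shapes survive because a cycle meets each of the initial segments cut at L,
   L + A - d and L + A (resp. at R, L, L + A - d for the smaller meander) in an even number of
   vertices, these sets being closed under a fixed-point-free involution; hence no pair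
   x_j, x_j + s - 1 of a shape is cut, and the shape splits into pieces that are moved rigidly.
   Reversing the composition does not change the meander, which handles L < R; iterating the
   step replaces A by A mod d, and zero parts can be dropped since they do not change theta_a. *)

theory Submission
  imports Defs
begin

fun block_flip :: "nat list \<Rightarrow> nat \<Rightarrow> nat" where
  "block_flip [] x = x"
| "block_flip (c # l) x =
     (if x = 0 then 0 else if x \<le> c then c + 1 - x else c + block_flip l (x - c))"

definition in_block :: "nat list \<Rightarrow> nat \<Rightarrow> nat \<Rightarrow> bool" where
  "in_block a j x \<longleftrightarrow> j < length a \<and> pre a j < x \<and> x \<le> pre a j + a ! j"

lemma in_block_Cons_0: "in_block (c # l) 0 x \<longleftrightarrow> 0 < x \<and> x \<le> c"
  by (simp add: in_block_def pre_def)

lemma in_block_Cons_Suc: "in_block (c # l) (Suc j) x \<longleftrightarrow> c < x \<and> in_block l j (x - c)"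
  by (auto simp: in_block_def pre_def)

lemma in_block_unique: "in_block a j x \<Longrightarrow> in_block a j' x \<Longrightarrow> j = j'"
proof (induction a arbitrary: j j' x)
  case Nil
  then show ?case by (simp add: in_block_def)
next
  case (Cons c l)
  then show ?case
    by (cases j; cases j') (auto simp: in_block_Cons_0 in_block_Cons_Suc)
qed

lemma block_flip_in_block:
  "in_block a j x \<Longrightarrow> block_flip a x = 2 * pre a j + a ! j + 1 - x"
proof (induction a arbitrary: j x)
  case Nil
  then show ?case by (simp add: in_block_def)
next
  case (Cons c l)
  show ?case
  proof (cases j)
    case 0
    then show ?thesis using Cons.prems by (simp add: in_block_Cons_0 pre_def)
  next
    case (Suc j')
    then have x: "c < x" "in_block l j' (x - c)"
      using Cons.prems by (simp_all add: in_block_Cons_Suc)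
    then have "x - c \<le> pre l j' + l ! j'" by (simp add: in_block_def)
    then show ?thesis using Cons.IH[OF x(2)] x(1) Suc by (simp add: pre_def)
  qed
qed

lemma block_flip_no_block: "\<not> (\<exists>j. in_block a j x) \<Longrightarrow> block_flip a x = x"
proof (induction a arbitrary: x)
  case Nil
  then show ?case by simp
next
  case (Cons c l)
  have "\<not> (\<exists>j. in_block l j (x - c))" if "c < x"
    using Cons.prems that by (metis in_block_Cons_Suc)
  then show ?case
    using Cons.IH Cons.prems in_block_Cons_0[of c l x] by (cases "c < x") auto
qed

lemma theta_a_eq_block_flip: "theta_a a = block_flip a"
proof
  fix x
  show "theta_a a x = block_flip a x"
  proof (cases "\<exists>j. in_block a j x")
    case True
    then obtain j where j: "in_block a j x" by blast
    then have "(THE i. i < length a \<and> pre a i < x \<and> x \<le> pre a i + a ! i) = j"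
      using in_block_unique unfolding in_block_def by blast
    then show ?thesis using j block_flip_in_block[OF j] by (auto simp: theta_a_def in_block_def)
  next
    case False
    then show ?thesis using block_flip_no_block[OF False] by (auto simp: theta_a_def in_block_def)
  qed
qed

lemma block_flip_outside: "x = 0 \<or> sum_list a < x \<Longrightarrow> block_flip a x = x"
  by (induction a arbitrary: x) auto

lemma block_flip_range: "x \<in> {1..sum_list a} \<Longrightarrow> block_flip a x \<in> {1..sum_list a}"
proof (induction a arbitrary: x)
  case (Cons c l)
  show ?case
  proof (cases "x \<le> c")
    case False
    then have "x - c \<in> {1..sum_list l}" using Cons.prems by auto
    then show ?thesis using Cons.IH[of "x - c"] False by auto
  qed (use Cons.prems in auto)
qed simp

lemma block_flip_involution: "block_flip a (block_flip a x) = x"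
proof (induction a arbitrary: x)
  case (Cons c l)
  have "block_flip l (x - c) \<noteq> 0" if "c < x"
    using that block_flip_range[of "x - c" l] block_flip_outside[of "x - c" l]
    by (cases "x - c \<le> sum_list l") fastforce+
  then show ?case using Cons.IH by auto
qed simp

lemma block_flip_append:
  "block_flip (xs @ ys) x =
     (if x \<le> sum_list xs then block_flip xs x else sum_list xs + block_flip ys (x - sum_list xs))"
  by (induction xs arbitrary: x) (auto simp: block_flip_outside)

lemma block_flip_middle:
  "block_flip (l1 @ c # l2) x =
     (if x \<le> sum_list l1 then block_flip l1 x
      else if x \<le> sum_list l1 + c then 2 * sum_list l1 + c + 1 - x
      else sum_list l1 + c + block_flip l2 (x - sum_list l1 - c))"
  by (auto simp: block_flip_append)

lemma block_flip_filter_nonzero: "block_flip (filter (\<lambda>x. x \<noteq> 0) a) = block_flip a"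
proof (induction a)
  case (Cons c l)
  then show ?case by (auto simp: block_flip_outside)
qed simp

lemma block_flip_rev:
  assumes "x \<in> {1..sum_list a}"
  shows "block_flip (rev a) x = sum_list a + 1 - block_flip a (sum_list a + 1 - x)"
  using assms
proof (induction a arbitrary: x)
  case (Cons c l)
  let ?S = "sum_list l"
  show ?case
  proof (cases "x \<le> ?S")
    case True
    then have "?S + 1 - x \<in> {1..?S}" using Cons.prems by auto
    then have "block_flip l (?S + 1 - x) \<le> ?S" using block_flip_range by auto
    then show ?thesis
      using True Cons.prems Cons.IH[of x] by (auto simp: block_flip_append sum_list_rev)
  next
    case False
    then show ?thesis using Cons.prems by (auto simp: block_flip_append sum_list_rev)
  qed
qed simp

lemma medges_iff:
  "(x, y) \<in> medges a \<longleftrightarrow>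
     x \<in> {1..sum_list a} \<and> (y = block_flip a x \<or> y = sum_list a + 1 - x)"
  by (simp add: medges_def theta_a_eq_block_flip theta_def)

lemma medges_range: "(x, y) \<in> medges a \<Longrightarrow> y \<in> {1..sum_list a}"
  using block_flip_range[of x a] by (auto simp: medges_iff)

lemma sym_medges: "sym (medges a)"
proof (rule symI)
  fix x y assume "(x, y) \<in> medges a"
  then show "(y, x) \<in> medges a"
    using medges_range[of x y a] block_flip_involution[of a x] by (auto simp: medges_iff)
qed

lemma rtrancl_medges_sym: "(x, y) \<in> (medges a)\<^sup>* \<Longrightarrow> (y, x) \<in> (medges a)\<^sup>*"
  using sym_rtrancl[OF sym_medges] by (auto simp: sym_def)

lemma rtrancl_medges_range:
  "(x, y) \<in> (medges a)\<^sup>* \<Longrightarrow> x \<in> {1..sum_list a} \<Longrightarrow> y \<in> {1..sum_list a}"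
  by (induction rule: rtrancl_induct) (auto dest: medges_range)

lemma rtrancl_medgesI:
  "x \<in> {1..sum_list a} \<Longrightarrow> y = block_flip a x \<or> y = sum_list a + 1 - x \<Longrightarrow>
     (x, y) \<in> (medges a)\<^sup>*"
  by (auto simp: medges_iff)

lemma mcomp_eq: "(x, y) \<in> (medges a)\<^sup>* \<Longrightarrow> mcomp a x = mcomp a y"
  unfolding mcomp_def using rtrancl_medges_sym by (blast intro: rtrancl_trans)

lemma mcomponents_eq_mcomp: "X \<in> mcomponents a \<Longrightarrow> y \<in> X \<Longrightarrow> X = mcomp a y"
  using mcomp_eq by (auto simp: mcomponents_def mcomp_def)

lemma mcomponents_subset: "X \<in> mcomponents a \<Longrightarrow> X \<subseteq> {1..sum_list a}"
  using rtrancl_medges_range by (auto simp: mcomponents_def mcomp_def)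

lemma mcomponents_finite: "X \<in> mcomponents a \<Longrightarrow> finite X"
  using mcomponents_subset finite_subset by blast

lemma mcomponents_closed:
  assumes "X \<in> mcomponents a" "y \<in> X" "(y, z) \<in> (medges a)\<^sup>*"
  shows "z \<in> X"
  using assms mcomponents_eq_mcomp[OF assms(1,2)] by (simp add: mcomp_def)

lemma mcomponents_block_flip: "X \<in> mcomponents a \<Longrightarrow> y \<in> X \<Longrightarrow> block_flip a y \<in> X"
  by (meson mcomponents_closed mcomponents_subset rtrancl_medgesI subsetD)

lemma mcomponents_theta: "X \<in> mcomponents a \<Longrightarrow> y \<in> X \<Longrightarrow> sum_list a + 1 - y \<in> X"
  by (meson mcomponents_closed mcomponents_subset rtrancl_medgesI subsetD)

lemma mcomponents_theta_image_Collect: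
  assumes "X \<in> mcomponents a"
  shows "(\<lambda>y. sum_list a + 1 - y) ` {x\<in>X. Q x} = {x\<in>X. Q (sum_list a + 1 - x)}"
proof -
  have "x = sum_list a + 1 - (sum_list a + 1 - x)" if "x \<in> X" for x
    using that mcomponents_subset[OF assms] by auto
  then show ?thesis using mcomponents_theta[OF assms] by (auto intro: rev_image_eqI)
qed

lemma mcomponents_theta_image: "X \<in> mcomponents a \<Longrightarrow> (\<lambda>y. sum_list a + 1 - y) ` X = X"
  using mcomponents_theta_image_Collect[of X a "\<lambda>_. True"] by simp

definition endpoint :: "nat list \<Rightarrow> nat \<Rightarrow> bool" where
  "endpoint a x \<longleftrightarrow> block_flip a x = x \<or> sum_list a + 1 - x = x"

lemma is_cycle_iff_no_endpoint:
  "is_cycle a X \<longleftrightarrow> X \<in> mcomponents a \<and> (\<forall>x\<in>X. \<not> endpoint a x)"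
  by (auto simp: is_cycle_def theta_a_eq_block_flip theta_def endpoint_def)

lemma is_cycle_iff:
  "is_cycle a X \<longleftrightarrow>
     X \<in> mcomponents a \<and> (\<forall>x\<in>X. x \<noteq> block_flip a x \<and> x \<noteq> sum_list a + 1 - x)"
  by (simp add: is_cycle_def theta_a_eq_block_flip theta_def)

locale component_transfer =
  fixes a b :: "nat list" and g h :: "nat \<Rightarrow> nat"
  assumes g_range: "x \<in> {1..sum_list a} \<Longrightarrow> g x \<in> {1..sum_list b}"
    and h_range: "y \<in> {1..sum_list b} \<Longrightarrow> h y \<in> {1..sum_list a}"
    and g_block_flip: "x \<in> {1..sum_list a} \<Longrightarrow> (g x, g (block_flip a x)) \<in> (medges b)\<^sup>*"
    and g_theta: "x \<in> {1..sum_list a} \<Longrightarrow> (g x, g (sum_list a + 1 - x)) \<in> (medges b)\<^sup>*"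
    and h_block_flip: "y \<in> {1..sum_list b} \<Longrightarrow> (h y, h (block_flip b y)) \<in> (medges a)\<^sup>*"
    and h_theta: "y \<in> {1..sum_list b} \<Longrightarrow> (h y, h (sum_list b + 1 - y)) \<in> (medges a)\<^sup>*"
    and g_h: "y \<in> {1..sum_list b} \<Longrightarrow> g (h y) = y"
    and h_g: "x \<in> {1..sum_list a} \<Longrightarrow> (x, h (g x)) \<in> (medges a)\<^sup>*"
begin

lemma g_rtrancl:
  "(x, y) \<in> (medges a)\<^sup>* \<Longrightarrow> x \<in> {1..sum_list a} \<Longrightarrow> (g x, g y) \<in> (medges b)\<^sup>*"
proof (induction rule: rtrancl_induct)
  case (step y z)
  then have "(g y, g z) \<in> (medges b)\<^sup>*" using g_block_flip g_theta by (auto simp: medges_iff)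
  with step show ?case by (blast intro: rtrancl_trans)
qed simp

lemma h_rtrancl:
  "(x, y) \<in> (medges b)\<^sup>* \<Longrightarrow> x \<in> {1..sum_list b} \<Longrightarrow> (h x, h y) \<in> (medges a)\<^sup>*"
proof (induction rule: rtrancl_induct)
  case (step y z)
  then have "(h y, h z) \<in> (medges a)\<^sup>*" using h_block_flip h_theta by (auto simp: medges_iff)
  with step show ?case by (blast intro: rtrancl_trans)
qed simp

lemma image_mcomp: "x \<in> {1..sum_list a} \<Longrightarrow> g ` mcomp a x = mcomp b (g x)"
proof
  assume x: "x \<in> {1..sum_list a}"
  show "g ` mcomp a x \<subseteq> mcomp b (g x)"
    using g_rtrancl x by (auto simp: mcomp_def)
  show "mcomp b (g x) \<subseteq> g ` mcomp a x"
  proof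
    fix z assume "z \<in> mcomp b (g x)"
    then have z: "(g x, z) \<in> (medges b)\<^sup>*" by (simp add: mcomp_def)
    have gx: "g x \<in> {1..sum_list b}" using g_range x .
    have "(x, h z) \<in> (medges a)\<^sup>*"
      using h_g[OF x] h_rtrancl[OF z gx] by (blast intro: rtrancl_trans)
    then show "z \<in> g ` mcomp a x"
      using g_h rtrancl_medges_range[OF z gx] by (force simp: mcomp_def)
  qed
qed

lemma image_mcomponents: "X \<in> mcomponents a \<Longrightarrow> g ` X \<in> mcomponents b"
  using image_mcomp g_range by (auto simp: mcomponents_def)

lemma h_mcomponents: "X \<in> mcomponents a \<Longrightarrow> y \<in> g ` X \<Longrightarrow> h y \<in> X"
  using h_g mcomponents_closed mcomponents_subset by blast

lemma bij_betw_image_mcomponents: "bij_betw (image g) (mcomponents a) (mcomponents b)"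
proof (rule bij_betw_imageI)
  show "inj_on (image g) (mcomponents a)"
  proof (rule inj_onI)
    fix X Y assume X: "X \<in> mcomponents a" and Y: "Y \<in> mcomponents a" and XY: "g ` X = g ` Y"
    obtain x where x: "x \<in> {1..sum_list a}" "X = mcomp a x" using X by (auto simp: mcomponents_def)
    obtain y where y: "y \<in> {1..sum_list a}" "Y = mcomp a y" using Y by (auto simp: mcomponents_def)
    have "g y \<in> mcomp b (g x)"
      using XY x y image_mcomp[of x] image_mcomp[of y] by (auto simp: mcomp_def)
    then have "(h (g x), h (g y)) \<in> (medges a)\<^sup>*"
      using h_rtrancl g_range x by (simp add: mcomp_def)
    then have "(x, y) \<in> (medges a)\<^sup>*"
      using h_g x y rtrancl_medges_sym by (blast intro: rtrancl_trans)
    then show "X = Y" using x y mcomp_eq by simp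
  qed
  show "image g ` mcomponents a = mcomponents b"
  proof
    show "image g ` mcomponents a \<subseteq> mcomponents b" using image_mcomponents by blast
    show "mcomponents b \<subseteq> image g ` mcomponents a"
    proof
      fix Z assume "Z \<in> mcomponents b"
      then obtain z where z: "z \<in> {1..sum_list b}" "Z = mcomp b z" by (auto simp: mcomponents_def)
      then have "Z = g ` mcomp a (h z)" using image_mcomp h_range g_h by simp
      moreover have "mcomp a (h z) \<in> mcomponents a" using h_range z by (auto simp: mcomponents_def)
      ultimately show "Z \<in> image g ` mcomponents a" by blast
    qed
  qed
qed

lemma image_eq_iff: "X \<in> mcomponents a \<Longrightarrow> Y \<in> mcomponents a \<Longrightarrow> g ` Y = g ` X \<longleftrightarrow> Y = X"
  using bij_betw_image_mcomponents by (auto simp: bij_betw_def dest: inj_onD)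

end

lemma meander_equivI:
  assumes bij: "bij_betw F (mcomponents a) (mcomponents b)"
    and cycle: "\<And>X. X \<in> mcomponents a \<Longrightarrow> is_cycle b (F X) \<longleftrightarrow> is_cycle a X"
    and shape: "\<And>X s. is_cycle a X \<Longrightarrow>
      (\<exists>xs. cycle_shape (F X) s xs) \<longleftrightarrow> (\<exists>xs. cycle_shape X s xs)"
    and inside: "\<And>X Y. X \<in> mcomponents a \<Longrightarrow> Y \<in> mcomponents a \<Longrightarrow>
      inside b (F Y) (F X) \<longleftrightarrow> inside a Y X"
  shows "meander_equiv a b"
  unfolding meander_equiv_def
proof (intro exI conjI ballI)
  show "bij_betw F (mcomponents a) (mcomponents b)" by (rule bij)
  fix X assume X: "X \<in> mcomponents a"
  have FX: "F X \<in> mcomponents b" using bij X by (auto simp: bij_betw_def)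
  have "(\<exists>Z. inside b (F X) Z) \<longleftrightarrow> (\<exists>Z. inside a X Z)"
  proof
    assume "\<exists>Z. inside b (F X) Z"
    then obtain Z where Z: "inside b (F X) Z" by blast
    then have "Z \<in> mcomponents b" by (simp add: inside_def is_cycle_def)
    then obtain Z' where "Z' \<in> mcomponents a" "Z = F Z'" using bij by (auto simp: bij_betw_def)
    then show "\<exists>Z. inside a X Z" using inside X Z by blast
  next
    assume "\<exists>Z. inside a X Z"
    then obtain Z where Z: "inside a X Z" by blast
    then have "Z \<in> mcomponents a" by (simp add: inside_def is_cycle_def)
    then show "\<exists>Z. inside b (F X) Z" using inside X Z by blast
  qed
  moreover have "is_cycle a X \<Longrightarrow> cycle_dim (F X) = cycle_dim X"
    unfolding cycle_dim_def using shape by presburger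
  ultimately show "max_dim b (F X) = max_dim a X"
    unfolding max_dim_def is_maximal_cycle_def is_segment_def using cycle[OF X] X FX by auto
qed

lemma meander_equiv_refl: "meander_equiv a a"
  unfolding meander_equiv_def by (rule exI[of _ id]) simp

lemma meander_equiv_sym: "meander_equiv a b \<Longrightarrow> meander_equiv b a"
proof -
  assume "meander_equiv a b"
  then obtain f where f: "bij_betw f (mcomponents a) (mcomponents b)"
    "\<forall>X\<in>mcomponents a. max_dim b (f X) = max_dim a X"
    unfolding meander_equiv_def by blast
  let ?g = "inv_into (mcomponents a) f"
  have "bij_betw ?g (mcomponents b) (mcomponents a)" using bij_betw_inv_into[OF f(1)] .
  moreover have "max_dim a (?g Y) = max_dim b Y" if "Y \<in> mcomponents b" for Y
    using f that by (metis bij_betw_inv_into_right bij_betw_imp_surj_on inv_into_into)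
  ultimately show ?thesis unfolding meander_equiv_def by blast
qed

lemma meander_equiv_trans: "meander_equiv a b \<Longrightarrow> meander_equiv b c \<Longrightarrow> meander_equiv a c"
proof -
  assume "meander_equiv a b" "meander_equiv b c"
  then obtain f g where f: "bij_betw f (mcomponents a) (mcomponents b)"
    "\<forall>X\<in>mcomponents a. max_dim b (f X) = max_dim a X"
    and g: "bij_betw g (mcomponents b) (mcomponents c)"
    "\<forall>X\<in>mcomponents b. max_dim c (g X) = max_dim b X"
    unfolding meander_equiv_def by blast
  have "bij_betw (g \<circ> f) (mcomponents a) (mcomponents c)" using bij_betw_trans[OF f(1) g(1)] .
  moreover have "\<forall>X\<in>mcomponents a. max_dim c ((g \<circ> f) X) = max_dim a X"
    using f g by (simp add: bij_betw_apply)
  ultimately show ?thesis unfolding meander_equiv_def by blast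
qed

lemma meander_equiv_if_same_cycles:
  assumes comps: "mcomponents a = mcomponents c" and cycles: "is_cycle a = is_cycle c"
  shows "meander_equiv a c"
proof -
  have "inside a = inside c" by (intro ext) (simp add: inside_def comps cycles)
  then have "max_dim a = max_dim c"
    by (intro ext) (simp add: max_dim_def is_maximal_cycle_def is_segment_def comps cycles)
  then show ?thesis unfolding meander_equiv_def comps by (rule_tac exI[of _ id]) simp
qed

lemma meander_equiv_if_block_flip_eq:
  assumes flip: "block_flip a = block_flip c" and sum: "sum_list a = sum_list c"
  shows "meander_equiv a c"
proof (rule meander_equiv_if_same_cycles)
  have "medges a = medges c" unfolding medges_def theta_a_eq_block_flip flip sum ..
  then show comps: "mcomponents a = mcomponents c" by (simp add: mcomponents_def mcomp_def sum)
  show "is_cycle a = is_cycle c" by (rule ext) (simp add: is_cycle_iff comps flip sum)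
qed

(* The set version of cycle_shape: P is the set {x_1, ..., x_m} of left ends. *)
definition shape_set :: "nat set \<Rightarrow> nat \<Rightarrow> nat set \<Rightarrow> bool" where
  "shape_set X s P \<longleftrightarrow> 1 < s \<and> finite P \<and> X = P \<union> (\<lambda>p. p + s - 1) ` P \<and>
     (\<forall>p\<in>P. \<forall>q\<in>P. p < q \<longrightarrow> p + s - 1 < q)"

lemma sorted_wrt_concat_pairs_iff:
  fixes xs :: "nat list"
  shows "sorted_wrt (<) (concat (map (\<lambda>x. [x, x + s - 1]) xs)) \<longleftrightarrow>
     (xs \<noteq> [] \<longrightarrow> 1 < s) \<and> sorted_wrt (<) xs \<and>
     (\<forall>p\<in>set xs. \<forall>q\<in>set xs. p < q \<longrightarrow> p + s - 1 < q)"
proof (induction xs)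
  case (Cons x xs)
  show ?case
  proof (cases "1 < s")
    case True
    then show ?thesis using Cons by (auto simp: sorted_wrt_append)
  qed auto
qed simp

lemma cycle_shape_imp_shape_set: "cycle_shape X s xs \<Longrightarrow> shape_set X s (set xs)"
  unfolding cycle_shape_def shape_set_def sorted_wrt_concat_pairs_iff by auto

lemma shape_set_imp_cycle_shape: "shape_set X s P \<Longrightarrow> cycle_shape X s (sorted_list_of_set P)"
  unfolding cycle_shape_def shape_set_def sorted_wrt_concat_pairs_iff by auto

lemma ex_cycle_shape_iff: "(\<exists>xs. cycle_shape X s xs) \<longleftrightarrow> (\<exists>P. shape_set X s P)"
  using cycle_shape_imp_shape_set shape_set_imp_cycle_shape by blast

lemma inside_iff:
  "inside a Y X \<longleftrightarrow> is_cycle a X \<and> Y \<in> mcomponents a \<and> Y \<noteq> X \<and>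
     (\<exists>s P. shape_set X s P \<and> 2 < s \<and> (\<exists>y\<in>Y. \<exists>x\<in>P. x \<le> y \<and> y \<le> x + s - 1))"
proof -
  have "(\<exists>s xs. cycle_shape X s xs \<and> 2 < s \<and> (\<exists>y\<in>Y. \<exists>x\<in>set xs. x \<le> y \<and> y \<le> x + s - 1)) \<longleftrightarrow>
        (\<exists>s P. shape_set X s P \<and> 2 < s \<and> (\<exists>y\<in>Y. \<exists>x\<in>P. x \<le> y \<and> y \<le> x + s - 1))"
    (is "?lists \<longleftrightarrow> ?sets")
  proof
    assume ?lists
    then show ?sets using cycle_shape_imp_shape_set by blast
  next
    assume ?sets
    then obtain s P where P: "shape_set X s P" "2 < s" "\<exists>y\<in>Y. \<exists>x\<in>P. x \<le> y \<and> y \<le> x + s - 1"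
      by blast
    moreover from P(1) have "set (sorted_list_of_set P) = P" by (simp add: shape_set_def)
    ultimately show ?lists using shape_set_imp_cycle_shape by metis
  qed
  then show ?thesis unfolding inside_def by blast
qed

lemma shape_set_first_difference:
  assumes P: "shape_set X s P" and Q: "shape_set X s Q" and z: "z \<in> P - Q"
    and below: "\<And>w. w < z \<Longrightarrow> w \<in> P \<longleftrightarrow> w \<in> Q"
  shows False
proof -
  have "z \<in> X" using P z by (auto simp: shape_set_def)
  then obtain q where q: "q \<in> Q" "z = q + s - 1" using Q z by (auto simp: shape_set_def)
  then have "q < z" using Q by (auto simp: shape_set_def)
  then have "q \<in> P" using below q by blast
  then have "q + s - 1 < z" using P z \<open>q < z\<close> by (auto simp: shape_set_def)
  then show False using q by simp
qed

lemma shape_set_unique: "shape_set X s P \<Longrightarrow> shape_set X s Q \<Longrightarrow> P = Q"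
proof (rule ccontr)
  assume P: "shape_set X s P" and Q: "shape_set X s Q" and "P \<noteq> Q"
  define D where "D = (P - Q) \<union> (Q - P)"
  have fin: "finite D" and "D \<noteq> {}" using P Q \<open>P \<noteq> Q\<close> by (auto simp: shape_set_def D_def)
  then have "Min D \<in> D" by simp
  have below: "w \<in> P \<longleftrightarrow> w \<in> Q" if "w < Min D" for w
    using that Min_le[OF fin, of w] unfolding D_def by auto
  show False
  proof (cases "Min D \<in> P - Q")
    case True
    then show False using shape_set_first_difference[OF P Q] below by blast
  next
    case False
    then have "Min D \<in> Q - P" using \<open>Min D \<in> D\<close> unfolding D_def by blast
    then show False using shape_set_first_difference[OF Q P] below by blast
  qed
qed

lemma shape_set_disjoint:
  assumes "shape_set X s P"
  shows "P \<inter> (\<lambda>p. p + s - 1) ` P = {}"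
proof -
  have "1 < s" using assms by (simp add: shape_set_def)
  have "q + s - 1 \<notin> P" if "q \<in> P" for q
  proof
    assume "q + s - 1 \<in> P"
    moreover have "q < q + s - 1" using \<open>1 < s\<close> by simp
    ultimately have "q + s - 1 < q + s - 1" using assms that unfolding shape_set_def by blast
    then show False by simp
  qed
  then show ?thesis by blast
qed

lemma even_card_involution:
  assumes "finite S" and "\<forall>x\<in>S. f x \<in> S \<and> f (f x) = x \<and> f x \<noteq> x"
  shows "even (card S)"
  using assms
proof (induction "card S" arbitrary: S rule: less_induct)
  case less
  show ?case
  proof (cases "S = {}")
    case False
    then obtain x where x: "x \<in> S" by blast
    let ?S = "S - {x, f x}"
    have fx: "f x \<in> S" "f x \<noteq> x" using less.prems x by auto
    have sub: "{x, f x} \<subseteq> S" using x fx by blast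
    have "card {x, f x} = 2" using fx by simp
    then have card: "card S = card ?S + 2"
      using card_Diff_subset[OF _ sub] card_mono[OF less.prems(1) sub] by simp
    have "f y \<in> ?S \<and> f (f y) = y \<and> f y \<noteq> y" if y: "y \<in> ?S" for y
    proof -
      have fy: "f y \<in> S" "f (f y) = y" "f y \<noteq> y" using less.prems y by auto
      moreover have "f (f x) = x" using less.prems x by auto
      then have "f y \<noteq> x" "f y \<noteq> f x" using fy(2) y by auto
      ultimately show ?thesis by simp
    qed
    then have "even (card ?S)" using less.hyps[of ?S] card less.prems(1) by auto
    then show ?thesis using card by simp
  qed simp
qed

definition no_crossing :: "nat set \<Rightarrow> nat \<Rightarrow> nat \<Rightarrow> bool" where
  "no_crossing P s q \<longleftrightarrow> (\<forall>p\<in>P. p \<le> q \<longrightarrow> p + s - 1 \<le> q)"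

lemma shape_set_no_crossing:
  assumes shape: "shape_set X s P" and even: "even (card {x\<in>X. x \<le> q})"
  shows "no_crossing P s q"
  unfolding no_crossing_def
proof (intro ballI impI, rule ccontr)
  fix p assume p: "p \<in> P" "p \<le> q" and "\<not> p + s - 1 \<le> q"
  then have cross: "q < p + s - 1" by simp
  have s: "1 < s" and fin: "finite P" and X: "X = P \<union> (\<lambda>p. p + s - 1) ` P"
    and gap: "\<forall>p\<in>P. \<forall>q\<in>P. p < q \<longrightarrow> p + s - 1 < q" using shape by (auto simp: shape_set_def)
  define B where "B = {p'\<in>P. p' + s - 1 \<le> q}"
  have "{x\<in>X. x \<le> q} = insert p (B \<union> (\<lambda>p. p + s - 1) ` B)"
  proof (intro equalityI subsetI)
    fix x assume x: "x \<in> {x\<in>X. x \<le> q}"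
    show "x \<in> insert p (B \<union> (\<lambda>p. p + s - 1) ` B)"
    proof (cases "x \<in> P")
      case True
      then consider "x = p" | "x < p" | "p < x" by linarith
      then show ?thesis
        using True gap p x cross unfolding B_def by cases fastforce+
    next
      case False
      then show ?thesis using x X unfolding B_def by auto
    qed
  qed (use p X s in \<open>auto simp: B_def\<close>)
  moreover have "finite B" "B \<inter> (\<lambda>p. p + s - 1) ` B = {}" "p \<notin> B \<union> (\<lambda>p. p + s - 1) ` B"
    using fin cross shape_set_disjoint[OF shape] p(1) unfolding B_def by auto
  moreover have "card ((\<lambda>p. p + s - 1) ` B) = card B"
    using s by (intro card_image) (auto simp: inj_on_def)
  ultimately have "card {x\<in>X. x \<le> q} = Suc (card B + card B)"
    by (simp add: card_Un_disjoint)
  then show False using even by simp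
qed

lemma shape_set_subset:
  "shape_set X s P \<Longrightarrow> P' \<subseteq> P \<Longrightarrow> shape_set (P' \<union> (\<lambda>p. p + s - 1) ` P') s P'"
  unfolding shape_set_def by (auto intro: finite_subset)

lemma shape_set_Un:
  assumes P1: "shape_set X1 s P1" and P2: "shape_set X2 s P2" and less: "\<forall>x\<in>X1. \<forall>y\<in>X2. x < y"
  shows "shape_set (X1 \<union> X2) s (P1 \<union> P2)"
proof -
  have X1: "X1 = P1 \<union> (\<lambda>p. p + s - 1) ` P1" and X2: "X2 = P2 \<union> (\<lambda>p. p + s - 1) ` P2"
    using P1 P2 by (simp_all add: shape_set_def)
  have across: "\<forall>p\<in>P1. \<forall>q\<in>P2. p < q \<and> p + s - 1 < q" using less X1 X2 by blast
  have "p + s - 1 < q" if p: "p \<in> P1 \<union> P2" and q: "q \<in> P1 \<union> P2" and "p < q" for p q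
  proof (cases "p \<in> P1")
    case True
    then show ?thesis using P1 across q \<open>p < q\<close> unfolding shape_set_def by blast
  next
    case False
    then have "p \<in> P2" "q \<in> P2" using p q \<open>p < q\<close> across by force+
    then show ?thesis using P2 \<open>p < q\<close> unfolding shape_set_def by blast
  qed
  moreover have "X1 \<union> X2 = (P1 \<union> P2) \<union> (\<lambda>p. p + s - 1) ` (P1 \<union> P2)"
    using X1 X2 by (auto simp: image_Un)
  ultimately show ?thesis using P1 P2 unfolding shape_set_def by auto
qed

lemma shape_set_image:
  assumes shape: "shape_set X s P" and shift: "\<And>p. p \<in> P \<Longrightarrow> f (p + s - 1) = f p + s - 1"
    and mono: "\<And>x y. x \<in> X \<Longrightarrow> y \<in> X \<Longrightarrow> x < y \<Longrightarrow> f x < f y"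
  shows "shape_set (f ` X) s (f ` P)"
proof -
  have X: "X = P \<union> (\<lambda>p. p + s - 1) ` P" and gap: "\<forall>p\<in>P. \<forall>q\<in>P. p < q \<longrightarrow> p + s - 1 < q"
    using shape by (auto simp: shape_set_def)
  have "f ` X = f ` P \<union> (\<lambda>p. p + s - 1) ` f ` P"
    using X shift by (force simp: image_Un image_image)
  moreover have "u + s - 1 < v" if uv: "u \<in> f ` P" "v \<in> f ` P" "u < v" for u v
  proof -
    obtain p q where pq: "p \<in> P" "q \<in> P" "u = f p" "v = f q" using uv by blast
    then have "p < q" using mono[of q p] X \<open>u < v\<close> by (cases "p < q"; cases "p = q") auto
    then have "f (p + s - 1) < f q" using mono pq gap X by blast
    then show ?thesis using shift pq by simp
  qed
  ultimately show ?thesis using shape unfolding shape_set_def by auto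
qed

lemma shape_set_shift_up: "shape_set X s P \<Longrightarrow> shape_set ((\<lambda>x. x + c) ` X) s ((\<lambda>x. x + c) ` P)"
  by (rule shape_set_image) (auto simp: shape_set_def)

lemma shape_set_shift_down:
  assumes "shape_set X s P" "\<forall>x\<in>X. c \<le> x"
  shows "shape_set ((\<lambda>x. x - c) ` X) s ((\<lambda>x. x - c) ` P)"
proof (rule shape_set_image[OF assms(1)])
  fix p assume "p \<in> P"
  then have "c \<le> p" "1 < s" using assms by (auto simp: shape_set_def)
  then show "p + s - 1 - c = p - c + s - 1" by simp
qed (use assms in auto)

lemma shape_set_reflect:
  assumes shape: "shape_set X s P" and bound: "\<forall>x\<in>X. x \<le> N"
  shows "shape_set ((\<lambda>x. N - x) ` X) s ((\<lambda>p. N - (p + s - 1)) ` P)"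
proof -
  have s: "1 < s" and X: "X = P \<union> (\<lambda>p. p + s - 1) ` P"
    and gap: "\<forall>p\<in>P. \<forall>q\<in>P. p < q \<longrightarrow> p + s - 1 < q" using shape by (auto simp: shape_set_def)
  have le: "\<forall>p\<in>P. p + s - 1 \<le> N" using bound X by blast
  have "(\<lambda>x. N - x) ` P = (\<lambda>p. p + s - 1) ` (\<lambda>p. N - (p + s - 1)) ` P"
    using le s by (force simp: image_image intro: image_cong)
  then have "(\<lambda>x. N - x) ` X =
      (\<lambda>p. N - (p + s - 1)) ` P \<union> (\<lambda>p. p + s - 1) ` (\<lambda>p. N - (p + s - 1)) ` P"
    using X by (auto simp: image_Un image_image)
  moreover have "u + s - 1 < v"
    if uv: "u \<in> (\<lambda>p. N - (p + s - 1)) ` P" "v \<in> (\<lambda>p. N - (p + s - 1)) ` P" "u < v" for u v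
  proof -
    obtain p q where pq: "p \<in> P" "q \<in> P" "u = N - (p + s - 1)" "v = N - (q + s - 1)"
      using uv by blast
    then have "q < p" using le \<open>u < v\<close> by fastforce
    then have "q + s - 1 < p" using gap pq by blast
    then show ?thesis using pq le s by auto
  qed
  ultimately show ?thesis using shape unfolding shape_set_def by auto
qed

lemma shape_set_prefix:
  assumes "shape_set X s P" "no_crossing P s q"
  shows "shape_set {x\<in>X. x \<le> q} s {p\<in>P. p \<le> q}"
proof -
  have "{x\<in>X. x \<le> q} = {p\<in>P. p \<le> q} \<union> (\<lambda>p. p + s - 1) ` {p\<in>P. p \<le> q}"
    using assms unfolding shape_set_def no_crossing_def by auto
  then show ?thesis using shape_set_subset[OF assms(1)] by simp
qed

lemma shape_set_suffix:
  assumes "shape_set X s P" "no_crossing P s q"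
  shows "shape_set {x\<in>X. q < x} s {p\<in>P. q < p}"
proof -
  have "q < p" if "p \<in> P" "q < p + s - 1" for p
    using assms(2) that unfolding no_crossing_def by force
  then have "{x\<in>X. q < x} = {p\<in>P. q < p} \<union> (\<lambda>p. p + s - 1) ` {p\<in>P. q < p}"
    using assms(1) unfolding shape_set_def by auto
  then show ?thesis using shape_set_subset[OF assms(1)] by simp
qed

lemma shape_set_between:
  assumes "shape_set X s P" "no_crossing P s lo" "no_crossing P s hi"
  shows "shape_set {x\<in>X. lo < x \<and> x \<le> hi} s {p\<in>P. lo < p \<and> p \<le> hi}"
proof -
  have "no_crossing {p\<in>P. lo < p} s hi" using assms(3) unfolding no_crossing_def by auto
  from shape_set_prefix[OF shape_set_suffix[OF assms(1,2)] this]
  have "shape_set {x \<in> {x\<in>X. lo < x}. x \<le> hi} s {p \<in> {p\<in>P. lo < p}. p \<le> hi}" .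
  moreover have "\<And>Z. {x \<in> {x\<in>Z. lo < x}. x \<le> hi} = {x\<in>Z. lo < x \<and> x \<le> hi}" by auto
  ultimately show ?thesis by simp
qed

lemma shape_set_reflect_closed:
  assumes shape: "shape_set Z s Q" and sym: "(\<lambda>y. N - y) ` Z = Z" and bound: "\<forall>z\<in>Z. z \<le> N"
    and "q \<in> Q"
  shows "N - (q + s - 1) \<in> Q"
proof -
  have "shape_set Z s ((\<lambda>p. N - (p + s - 1)) ` Q)"
    using shape_set_reflect[OF shape bound] sym by simp
  then have "Q = (\<lambda>p. N - (p + s - 1)) ` Q" using shape_set_unique shape by blast
  then show ?thesis using \<open>q \<in> Q\<close> by blast
qed

lemma even_card_prefix_iff:
  fixes X :: "nat set"
  assumes "finite X" "q0 \<le> q1" "even (card {x\<in>X. q0 < x \<and> x \<le> q1})"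
  shows "even (card {x\<in>X. x \<le> q1}) \<longleftrightarrow> even (card {x\<in>X. x \<le> q0})"
proof -
  have "{x\<in>X. x \<le> q1} = {x\<in>X. x \<le> q0} \<union> {x\<in>X. q0 < x \<and> x \<le> q1}" using assms(2) by auto
  moreover have "card ({x\<in>X. x \<le> q0} \<union> {x\<in>X. q0 < x \<and> x \<le> q1}) =
      card {x\<in>X. x \<le> q0} + card {x\<in>X. q0 < x \<and> x \<le> q1}"
    using assms(1) by (intro card_Un_disjoint) auto
  ultimately show ?thesis using assms(3) by simp
qed

lemma cycle_even_card_prefix:
  assumes X: "is_cycle a X" and closed: "\<And>x. 1 \<le> x \<Longrightarrow> x \<le> q \<Longrightarrow> block_flip a x \<le> q"
  shows "even (card {x\<in>X. x \<le> q})"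
proof (rule even_card_involution)
  have comp: "X \<in> mcomponents a" using X by (simp add: is_cycle_iff)
  then show "finite {x\<in>X. x \<le> q}" using mcomponents_finite by simp
  show "\<forall>x\<in>{x\<in>X. x \<le> q}. block_flip a x \<in> {x\<in>X. x \<le> q} \<and>
      block_flip a (block_flip a x) = x \<and> block_flip a x \<noteq> x"
  proof
    fix x assume x: "x \<in> {x\<in>X. x \<le> q}"
    then have "1 \<le> x" using mcomponents_subset[OF comp] by auto
    then show "block_flip a x \<in> {x\<in>X. x \<le> q} \<and> block_flip a (block_flip a x) = x \<and>
        block_flip a x \<noteq> x"
      using x closed mcomponents_block_flip[OF comp] block_flip_involution X
      by (auto simp: is_cycle_iff)
  qed
qed

lemma cycle_even_card_symmetric:
  assumes X: "is_cycle a X"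
  shows "even (card {x\<in>X. lo < x \<and> x \<le> sum_list a - lo})"
proof (rule even_card_involution)
  have comp: "X \<in> mcomponents a" using X by (simp add: is_cycle_iff)
  then show "finite {x\<in>X. lo < x \<and> x \<le> sum_list a - lo}" using mcomponents_finite by simp
  show "\<forall>x\<in>{x\<in>X. lo < x \<and> x \<le> sum_list a - lo}.
      sum_list a + 1 - x \<in> {x\<in>X. lo < x \<and> x \<le> sum_list a - lo} \<and>
      sum_list a + 1 - (sum_list a + 1 - x) = x \<and> sum_list a + 1 - x \<noteq> x"
  proof
    fix x assume x: "x \<in> {x\<in>X. lo < x \<and> x \<le> sum_list a - lo}"
    then have "1 \<le> x" "x \<le> sum_list a" using mcomponents_subset[OF comp] by auto
    then show "sum_list a + 1 - x \<in> {x\<in>X. lo < x \<and> x \<le> sum_list a - lo} \<and>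
        sum_list a + 1 - (sum_list a + 1 - x) = x \<and> sum_list a + 1 - x \<noteq> x"
      using x mcomponents_theta[OF comp] X by (auto simp: is_cycle_iff)
  qed
qed

lemma medges_rev:
  assumes "(x, y) \<in> medges a"
  shows "(sum_list a + 1 - x, sum_list a + 1 - y) \<in> medges (rev a)"
proof -
  have x: "x \<in> {1..sum_list a}" using assms by (simp add: medges_iff)
  then have "sum_list a + 1 - x \<in> {1..sum_list a}" by auto
  from block_flip_rev[OF this]
  have "block_flip (rev a) (sum_list a + 1 - x) = sum_list a + 1 - block_flip a x"
    using x by simp
  then show ?thesis using assms x by (auto simp: medges_iff sum_list_rev)
qed

lemma rtrancl_medges_rev:
  "(x, y) \<in> (medges a)\<^sup>* \<Longrightarrow> (sum_list a + 1 - x, sum_list a + 1 - y) \<in> (medges (rev a))\<^sup>*"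
proof (induction rule: rtrancl_induct)
  case (step y z)
  show ?case by (rule rtrancl_into_rtrancl[OF step.IH medges_rev[OF step.hyps(2)]])
qed simp

(* Reversing a conjugates its meander by theta, which maps every component onto itself. *)
lemma mcomp_subset_mcomp_rev:
  assumes x: "x \<in> {1..sum_list a}"
  shows "mcomp a x \<subseteq> mcomp (rev a) x"
proof
  fix y assume "y \<in> mcomp a x"
  then have xy: "(x, y) \<in> (medges a)\<^sup>*" by (simp add: mcomp_def)
  then have y: "y \<in> {1..sum_list a}" using rtrancl_medges_range x by blast
  let ?r = "\<lambda>z. sum_list a + 1 - z"
  have "(x, ?r x) \<in> medges (rev a)" using x by (simp add: medges_iff sum_list_rev)
  moreover have "(?r y, ?r (?r y)) \<in> medges (rev a)" using y by (auto simp: medges_iff sum_list_rev)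
  moreover have "?r (?r y) = y" using y by simp
  ultimately have "(x, y) \<in> (medges (rev a))\<^sup>*"
    using rtrancl_medges_rev[OF xy]
    by (metis converse_rtrancl_into_rtrancl rtrancl.rtrancl_into_rtrancl)
  then show "y \<in> mcomp (rev a) x" by (simp add: mcomp_def)
qed

lemma mcomponents_rev: "mcomponents (rev a) = mcomponents a"
proof -
  have "mcomp (rev a) x = mcomp a x" if "x \<in> {1..sum_list a}" for x
    using mcomp_subset_mcomp_rev[of x a] mcomp_subset_mcomp_rev[of x "rev a"] that
    by (simp add: sum_list_rev)
  then show ?thesis by (simp add: mcomponents_def sum_list_rev)
qed

lemma is_cycle_rev_imp:
  assumes cycle: "is_cycle (rev a) X"
  shows "is_cycle a X"
proof -
  let ?n = "sum_list a"
  have comp: "X \<in> mcomponents a" using cycle mcomponents_rev by (simp add: is_cycle_iff)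
  have no_fix: "z \<noteq> block_flip (rev a) z \<and> z \<noteq> ?n + 1 - z" if "z \<in> X" for z
    using cycle that unfolding is_cycle_iff sum_list_rev by blast
  have "x \<noteq> block_flip a x" if x: "x \<in> X" for x
  proof
    assume fixed: "x = block_flip a x"
    have range: "x \<in> {1..?n}" using mcomponents_subset[OF comp] x by auto
    then have "?n + 1 - x \<in> {1..?n}" by auto
    from block_flip_rev[OF this]
    have "block_flip (rev a) (?n + 1 - x) = ?n + 1 - x" using range fixed by simp
    then show False using no_fix[OF mcomponents_theta[OF comp x]] by simp
  qed
  then show ?thesis using comp no_fix by (simp add: is_cycle_iff)
qed

lemma meander_equiv_rev: "meander_equiv a (rev a)"
proof -
  have "is_cycle (rev a) = is_cycle a"
    using is_cycle_rev_imp[of a] is_cycle_rev_imp[of "rev a"] by auto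
  then show ?thesis using meander_equiv_if_same_cycles[OF mcomponents_rev[symmetric]] by simp
qed

locale reduction_step =
  fixes l1 l2 :: "nat list" and A L R d n m :: nat
  assumes L: "L = sum_list l1" and R: "R = sum_list l2" and R_less_L: "R < L"
    and d: "d = L - R" and d_le_A: "d \<le> A" and n: "n = L + A + R" and m: "m = L + (A - d) + R"
begin

definition a :: "nat list" where "a = l1 @ A # l2"

definition b :: "nat list" where "b = l1 @ (A - d) # l2"

definition collapse :: "nat \<Rightarrow> nat" where
  "collapse x = (if x \<le> L then x else if x \<le> L + A then n + 1 - x else x - d)"

definition expand :: "nat \<Rightarrow> nat" where
  "expand y = (if y \<le> L then y else if y \<le> L + A - d then n + 1 - y else y + d)"

lemma sum_a: "sum_list a = n" using L R n by (simp add: a_def)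
lemma sum_b: "sum_list b = m" using L R m by (simp add: b_def)
lemma R_plus_d: "R + d = L" using R_less_L d by simp
lemma m_plus_d: "m + d = n" using m n d_le_A by simp

lemma block_flip_a:
  "block_flip a x =
     (if x \<le> L then block_flip l1 x else if x \<le> L + A then 2 * L + A + 1 - x
      else L + A + block_flip l2 (x - L - A))"
  unfolding a_def block_flip_middle L by simp

lemma block_flip_b:
  "block_flip b x =
     (if x \<le> L then block_flip l1 x else if x \<le> L + (A - d) then 2 * L + (A - d) + 1 - x
      else L + (A - d) + block_flip l2 (x - L - (A - d)))"
  unfolding b_def block_flip_middle L by simp

lemma block_flip_l1_range: "1 \<le> x \<Longrightarrow> x \<le> L \<Longrightarrow> 1 \<le> block_flip l1 x \<and> block_flip l1 x \<le> L"
  using block_flip_range[of x l1] L by simp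

lemma block_flip_l2_range: "1 \<le> x \<Longrightarrow> x \<le> R \<Longrightarrow> 1 \<le> block_flip l2 x \<and> block_flip l2 x \<le> R"
  using block_flip_range[of x l2] R by simp

lemma block_flip_high:
  assumes "L + A < x"
  shows "block_flip b (x - d) + d = block_flip a x"
proof -
  have "\<not> x - d \<le> L + (A - d)" "\<not> x - d \<le> L" using assms d_le_A by linarith+
  then have "block_flip b (x - d) = L + (A - d) + block_flip l2 (x - d - L - (A - d))"
    by (simp add: block_flip_b)
  also have "x - d - L - (A - d) = x - L - A" using assms d_le_A by linarith
  finally show ?thesis using assms d_le_A by (simp add: block_flip_a)
qed

lemma block_flip_high_range:
  assumes "L + A < x" "x \<le> n"
  shows "L + A < block_flip a x"
proof -
  have "1 \<le> x - L - A" "x - L - A \<le> R" using assms n by auto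
  then have "1 \<le> block_flip l2 (x - L - A)" using block_flip_l2_range by blast
  then show ?thesis using assms by (simp add: block_flip_a)
qed

lemma rtrancl_medges_aI: "x \<in> {1..n} \<Longrightarrow> y = block_flip a x \<or> y = n + 1 - x \<Longrightarrow> (x, y) \<in> (medges a)\<^sup>*"
  using rtrancl_medgesI[of x a] sum_a by simp

lemma rtrancl_medges_bI: "x \<in> {1..m} \<Longrightarrow> y = block_flip b x \<or> y = m + 1 - x \<Longrightarrow> (x, y) \<in> (medges b)\<^sup>*"
  using rtrancl_medgesI[of x b] sum_b by simp

lemma shifted_vertex_connected: "R < z \<Longrightarrow> z \<le> L \<Longrightarrow> (z, z + d) \<in> (medges a)\<^sup>*"
proof -
  assume z: "R < z" "z \<le> L"
  have u: "L < n + 1 - z" "n + 1 - z \<le> L + A" using z n R_plus_d d_le_A by linarith+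
  then have "block_flip a (n + 1 - z) = z + d" unfolding block_flip_a using z n R_plus_d by auto
  then have "(n + 1 - z, z + d) \<in> (medges a)\<^sup>*" using rtrancl_medges_aI[of "n + 1 - z"] u n by simp
  moreover have "(z, n + 1 - z) \<in> (medges a)\<^sup>*" using rtrancl_medges_aI[of z] z n R_less_L by simp
  ultimately show ?thesis by (rule rtrancl_trans[rotated])
qed

lemma collapse_low: "x \<le> L \<Longrightarrow> collapse x = x"
  by (simp add: collapse_def)

lemma collapse_mid: "L < x \<Longrightarrow> x \<le> L + A \<Longrightarrow> collapse x = n + 1 - x"
  by (simp add: collapse_def)

lemma collapse_high: "L + A < x \<Longrightarrow> collapse x = x - d"
  by (simp add: collapse_def)

lemma expand_low: "y \<le> L \<Longrightarrow> expand y = y"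
  by (simp add: expand_def)

lemma expand_mid: "L < y \<Longrightarrow> y \<le> L + A - d \<Longrightarrow> expand y = n + 1 - y"
  by (simp add: expand_def)

lemma expand_high: "L + A - d < y \<Longrightarrow> expand y = y + d"
  unfolding expand_def using d_le_A by auto

lemma n_minus_L: "n - L = L + A - d"
  using n R_plus_d d_le_A by simp

lemma L_le_L_plus_A_minus_d: "L \<le> L + A - d"
  using d_le_A by simp

lemma collapse_range: "x \<in> {1..n} \<Longrightarrow> collapse x \<in> {1..m}"
  unfolding collapse_def using n m R_plus_d d_le_A by auto

lemma expand_range: "y \<in> {1..m} \<Longrightarrow> expand y \<in> {1..n}"
  unfolding expand_def using n m R_plus_d d_le_A by auto

lemma collapse_expand: "y \<in> {1..m} \<Longrightarrow> collapse (expand y) = y"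
  unfolding collapse_def expand_def using n m R_plus_d d_le_A by auto

lemma expand_collapse: "x \<in> {1..n} \<Longrightarrow> (x, expand (collapse x)) \<in> (medges a)\<^sup>*"
proof -
  assume x: "x \<in> {1..n}"
  consider "x \<le> L" | "L < x" "x \<le> L + A" "n + 1 - x \<le> L" | "L < x" "x \<le> L + A" "L < n + 1 - x"
    | "L + A < x" by linarith
  then show ?thesis
  proof cases
    case 2
    then have "expand (collapse x) = n + 1 - x" by (simp add: collapse_def expand_def)
    then show ?thesis using rtrancl_medges_aI[of x] x by simp
  next
    case 3
    have "n + 1 - x \<le> L + A - d" using 3 n R_plus_d by linarith
    then have "expand (collapse x) = x" using 3 x by (simp add: collapse_def expand_def)
    then show ?thesis by simp
  qed (use d_le_A in \<open>auto simp: collapse_def expand_def\<close>)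
qed

lemma collapse_block_flip:
  assumes x: "x \<in> {1..n}"
  shows "(collapse x, collapse (block_flip a x)) \<in> (medges b)\<^sup>*"
proof -
  consider "x \<le> L" | "L < x" "x \<le> L + A" | "L + A < x" by linarith
  then show ?thesis
  proof cases
    case 1
    then have "block_flip a x = block_flip l1 x" "block_flip b x = block_flip l1 x"
      by (simp_all add: block_flip_a block_flip_b)
    moreover have "block_flip l1 x \<le> L" using block_flip_l1_range x 1 by auto
    ultimately show ?thesis using 1 x rtrancl_medges_bI[of x] m by (simp add: collapse_def)
  next
    case 2
    then have "collapse x = n + 1 - x" "collapse (block_flip a x) = x - d"
      unfolding collapse_def block_flip_a using n R_plus_d by auto
    moreover have "m + 1 - (n + 1 - x) = x - d" "n + 1 - x \<in> {1..m}"
      using 2 x m_plus_d n m R_plus_d d_le_A by auto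
    ultimately show ?thesis using rtrancl_medges_bI[of "n + 1 - x"] by simp
  next
    case 3
    have "L + A < block_flip a x" using 3 x block_flip_high_range by auto
    then have "collapse (block_flip a x) = block_flip b (x - d)"
      using block_flip_high[OF 3] by (simp add: collapse_def)
    moreover have "collapse x = x - d" "x - d \<in> {1..m}"
      using 3 x m_plus_d d_le_A by (auto simp: collapse_def)
    ultimately show ?thesis using rtrancl_medges_bI[of "x - d"] by simp
  qed
qed

lemma collapse_theta:
  assumes x: "x \<in> {1..n}"
  shows "(collapse x, collapse (n + 1 - x)) \<in> (medges b)\<^sup>*"
proof -
  consider "x \<le> R" | "R < x" "x \<le> L" | "L < x" "x \<le> L + A" "n + 1 - x \<le> L"
    | "L < x" "x \<le> L + A" "L < n + 1 - x" | "L + A < x" by linarith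
  then show ?thesis
  proof cases
    case 1
    then have "collapse x = x" "collapse (n + 1 - x) = m + 1 - x"
      unfolding collapse_def using R_less_L n m_plus_d by auto
    then show ?thesis using rtrancl_medges_bI[of x] 1 x m R_less_L by simp
  next
    case 2
    then have "collapse x = x" "collapse (n + 1 - x) = x"
      unfolding collapse_def using n R_plus_d d_le_A by auto
    then show ?thesis by simp
  next
    case 3
    then have "collapse x = collapse (n + 1 - x)" by (simp add: collapse_def)
    then show ?thesis by simp
  next
    case 4
    then have "collapse x = n + 1 - x" "collapse (n + 1 - x) = x"
      unfolding collapse_def using x n R_plus_d by auto
    moreover have "block_flip b (n + 1 - x) = x" "n + 1 - x \<in> {1..m}"
      unfolding block_flip_b using 4 x n m R_plus_d d_le_A by auto
    ultimately show ?thesis using rtrancl_medges_bI[of "n + 1 - x"] by simp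
  next
    case 5
    then have "collapse x = x - d" "collapse (n + 1 - x) = n + 1 - x"
      unfolding collapse_def using x n R_less_L by auto
    moreover have "m + 1 - (x - d) = n + 1 - x" "x - d \<in> {1..m}"
      using 5 x m_plus_d d_le_A R_plus_d by auto
    ultimately show ?thesis using rtrancl_medges_bI[of "x - d"] by simp
  qed
qed

lemma expand_block_flip:
  assumes y: "y \<in> {1..m}"
  shows "(expand y, expand (block_flip b y)) \<in> (medges a)\<^sup>*"
proof -
  have y_n: "y \<in> {1..n}" using y m_plus_d by auto
  consider "y \<le> L" | "L < y" "y \<le> L + A - d" | "L + A - d < y" by linarith
  then show ?thesis
  proof cases
    case 1
    then have "block_flip a y = block_flip l1 y" "block_flip b y = block_flip l1 y"
      by (simp_all add: block_flip_a block_flip_b)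
    moreover have "block_flip l1 y \<le> L" using block_flip_l1_range y 1 by auto
    ultimately show ?thesis using 1 y_n rtrancl_medges_aI[of y] by (simp add: expand_def)
  next
    case 2
    then have "block_flip b y = 2 * L + (A - d) + 1 - y" using d_le_A by (simp add: block_flip_b)
    then have "expand y = n + 1 - y" "expand (block_flip b y) = y"
      unfolding expand_def using 2 n R_plus_d d_le_A by auto
    moreover have "n + 1 - y \<in> {1..n}" "n + 1 - (n + 1 - y) = y" using 2 y m_plus_d by auto
    ultimately show ?thesis using rtrancl_medges_aI[of "n + 1 - y"] by simp
  next
    case 3
    then have high: "L + A < y + d" using d_le_A by linarith
    then have "L + A < block_flip a (y + d)" using y m_plus_d block_flip_high_range by auto
    moreover have flip: "block_flip b y + d = block_flip a (y + d)"
      using block_flip_high[OF high] by simp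
    ultimately have "L + A - d < block_flip b y" using d_le_A by linarith
    then have "expand (block_flip b y) = block_flip a (y + d)" using flip expand_high by simp
    moreover have "expand y = y + d" "y + d \<in> {1..n}" using 3 y m_plus_d expand_high by auto
    ultimately show ?thesis using rtrancl_medges_aI by simp
  qed
qed

lemma expand_theta_lower_half:
  assumes y: "y \<in> {1..m}" and half: "2 * y \<le> m + 1"
  shows "(expand y, expand (m + 1 - y)) \<in> (medges a)\<^sup>*"
proof -
  consider "y \<le> R" | "R < y" "y \<le> L" "m + 1 - y \<le> L" | "R < y" "y \<le> L" "L < m + 1 - y"
    | "L < y" "y \<le> L + A - d" "L < m + 1 - y"
    using half m R_less_L d_le_A by linarith
  then show ?thesis
  proof cases
    case 1
    then have "expand y = y" "expand (m + 1 - y) = n + 1 - y"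
      unfolding expand_def using R_less_L m m_plus_d d_le_A by auto
    then show ?thesis using rtrancl_medges_aI[of y] 1 y n R_less_L by simp
  next
    case 2
    then have "expand y = y" "expand (m + 1 - y) = m + 1 - y" by (simp_all add: expand_def)
    moreover have "(y + d, n + 1 - (y + d)) \<in> (medges a)\<^sup>*"
      using rtrancl_medges_aI[of "y + d"] y n R_plus_d 2 d_le_A by simp
    moreover have "n + 1 - (y + d) = m + 1 - y" using m_plus_d by simp
    ultimately show ?thesis using shifted_vertex_connected[of y] 2 by (metis rtrancl_trans)
  next
    case 3
    then have "expand y = y" "expand (m + 1 - y) = y + d"
      unfolding expand_def using y m m_plus_d R_plus_d d_le_A by auto
    then show ?thesis using shifted_vertex_connected[of y] 3 by simp
  next
    case 4
    then have "expand y = n + 1 - y" "expand (m + 1 - y) = y + d"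
      unfolding expand_def using y m m_plus_d R_plus_d d_le_A by auto
    moreover have "block_flip a (y + d) = n + 1 - y"
      unfolding block_flip_a using 4 n R_plus_d d_le_A by auto
    ultimately show ?thesis
      using rtrancl_medges_aI[of "y + d"] rtrancl_medges_sym y n d_le_A 4 by simp
  qed
qed

lemma expand_theta:
  assumes y: "y \<in> {1..m}"
  shows "(expand y, expand (m + 1 - y)) \<in> (medges a)\<^sup>*"
proof (cases "2 * y \<le> m + 1")
  case True
  then show ?thesis using expand_theta_lower_half y by blast
next
  case False
  then have "m + 1 - y \<in> {1..m}" "2 * (m + 1 - y) \<le> m + 1" "m + 1 - (m + 1 - y) = y"
    using y by auto
  then show ?thesis using expand_theta_lower_half rtrancl_medges_sym by metis
qed

sublocale component_transfer a b collapse expand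
  by (unfold_locales; unfold sum_a sum_b)
    (erule collapse_range expand_range collapse_block_flip collapse_theta expand_block_flip
      expand_theta collapse_expand expand_collapse)+

lemma endpoint_a_iff: "endpoint a x \<longleftrightarrow> block_flip a x = x \<or> n + 1 - x = x"
  by (simp add: endpoint_def sum_a)

lemma endpoint_b_iff: "endpoint b y \<longleftrightarrow> block_flip b y = y \<or> m + 1 - y = y"
  by (simp add: endpoint_def sum_b)

lemma collapse_endpoint_mid:
  assumes x: "L < x" "x \<le> L + A" "x \<le> n" and fixed: "endpoint a x"
  shows "endpoint b (n + 1 - x)"
proof (cases "block_flip a x = x")
  case True
  then have "2 * L + A + 1 - x = x" using x by (simp add: block_flip_a)
  then have "m + 1 - (n + 1 - x) = n + 1 - x" using m_plus_d n R_plus_d d_le_A x by linarith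
  then show ?thesis by (simp add: endpoint_b_iff)
next
  case False
  then have centre: "n + 1 - x = x" using fixed by (simp add: endpoint_a_iff)
  then have odd: "2 * x = 2 * L + (A - d) + 1" using x n R_plus_d d_le_A by linarith
  have "A - d \<noteq> 0"
  proof
    assume "A - d = 0"
    then have "2 * x = 2 * L + 1" using odd by simp
    then show False by presburger
  qed
  then have "x \<le> L + (A - d)" "2 * L + (A - d) + 1 - x = x" using odd by linarith+
  then have "block_flip b x = x" using x by (simp add: block_flip_b)
  then show ?thesis using centre by (simp add: endpoint_b_iff)
qed

lemma collapse_endpoint:
  assumes x: "x \<in> {1..n}" and fixed: "endpoint a x"
  shows "endpoint b (collapse x)"
proof -
  consider "x \<le> L" | "L < x" "x \<le> L + A" | "L + A < x" by linarith
  then show ?thesis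
  proof cases
    case 1
    have "n + 1 - x \<noteq> x" using 1 n R_plus_d d_le_A by linarith
    then have "block_flip a x = x" using fixed by (simp add: endpoint_a_iff)
    then show ?thesis using 1 by (simp add: endpoint_b_iff block_flip_a block_flip_b collapse_def)
  next
    case 2
    then show ?thesis using collapse_endpoint_mid x fixed collapse_mid by simp
  next
    case 3
    have "n + 1 - x \<noteq> x" using 3 n R_less_L by linarith
    then have "block_flip a x = x" using fixed by (simp add: endpoint_a_iff)
    then have "block_flip b (x - d) = x - d" using block_flip_high[OF 3] by simp
    then show ?thesis using 3 by (simp add: endpoint_b_iff collapse_high)
  qed
qed

lemma centre_b_fixed_in_a:
  assumes centre: "m + 1 - y = y" and y: "y \<in> {1..m}"
  shows "n + 1 - y = y + d" "block_flip a (y + d) = y + d"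
proof -
  have "2 * y = m + 1" using centre y by auto
  then show "n + 1 - y = y + d" using m_plus_d by linarith
  have "L < y + d" "y + d \<le> L + A" "2 * L + A + 1 - (y + d) = y + d"
    using \<open>2 * y = m + 1\<close> m n R_plus_d d_le_A R_less_L by linarith+
  then show "block_flip a (y + d) = y + d" by (simp add: block_flip_a)
qed

lemma expand_endpoint:
  assumes y: "y \<in> {1..m}" and fixed: "endpoint b y"
  shows "endpoint a (expand y) \<or> endpoint a (n + 1 - expand y)"
proof -
  consider "y \<le> L" | "L < y" "y \<le> L + A - d" | "L + A - d < y" by linarith
  then show ?thesis
  proof cases
    case 1
    then have expand: "expand y = y" by (simp add: expand_def)
    show ?thesis
    proof (cases "block_flip b y = y")
      case True
      then have "block_flip a y = y" using 1 by (simp add: block_flip_a block_flip_b)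
      then show ?thesis using expand by (simp add: endpoint_a_iff)
    next
      case False
      then have "m + 1 - y = y" using fixed by (simp add: endpoint_b_iff)
      then show ?thesis using centre_b_fixed_in_a y expand by (simp add: endpoint_a_iff)
    qed
  next
    case 2
    then have expand: "expand y = n + 1 - y" by (simp add: expand_def)
    show ?thesis
    proof (cases "block_flip b y = y")
      case True
      then have "2 * L + (A - d) + 1 - y = y" using 2 d_le_A by (simp add: block_flip_b)
      then have "n + 1 - (n + 1 - y) = n + 1 - y" using n R_plus_d d_le_A by linarith
      then show ?thesis using expand by (simp add: endpoint_a_iff)
    next
      case False
      then have "m + 1 - y = y" using fixed by (simp add: endpoint_b_iff)
      then show ?thesis using centre_b_fixed_in_a y expand by (simp add: endpoint_a_iff)
    qed
  next
    case 3
    have "m + 1 - y \<noteq> y" using 3 y m R_plus_d d_le_A R_less_L by linarith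
    then have "block_flip b y = y" using fixed by (simp add: endpoint_b_iff)
    moreover have "L + A < y + d" using 3 d_le_A by linarith
    ultimately have "block_flip a (y + d) = y + d" using block_flip_high[of "y + d"] by simp
    then show ?thesis using expand_high[OF 3] by (simp add: endpoint_a_iff)
  qed
qed

lemma is_cycle_image_iff:
  assumes X: "X \<in> mcomponents a"
  shows "is_cycle b (collapse ` X) \<longleftrightarrow> is_cycle a X"
proof -
  have "(\<exists>x\<in>X. endpoint a x) \<longleftrightarrow> (\<exists>y\<in>collapse ` X. endpoint b y)"
  proof
    assume "\<exists>x\<in>X. endpoint a x"
    then show "\<exists>y\<in>collapse ` X. endpoint b y"
      using collapse_endpoint mcomponents_subset[OF X] sum_a by blast
  next
    assume "\<exists>y\<in>collapse ` X. endpoint b y"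
    then obtain y where y: "y \<in> collapse ` X" "endpoint b y" by blast
    moreover have "y \<in> {1..m}" using mcomponents_subset[OF image_mcomponents[OF X]] y sum_b by auto
    moreover have "expand y \<in> X" "n + 1 - expand y \<in> X"
      using h_mcomponents[OF X y(1)] mcomponents_theta[OF X] sum_a by auto
    ultimately show "\<exists>x\<in>X. endpoint a x" using expand_endpoint by blast
  qed
  then show ?thesis
    using X image_mcomponents[OF X] by (auto simp: is_cycle_iff_no_endpoint)
qed

lemma cycle_no_crossing_a:
  assumes X: "is_cycle a X" and P: "shape_set X s P"
  shows "no_crossing P s L" "no_crossing P s (L + A)" "no_crossing P s (L + A - d)"
proof -
  have comp: "X \<in> mcomponents a" using X by (simp add: is_cycle_iff)
  have even_L: "even (card {x\<in>X. x \<le> L})"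
    by (rule cycle_even_card_prefix[OF X]) (use block_flip_l1_range in \<open>simp add: block_flip_a\<close>)
  have "even (card {x\<in>X. x \<le> L + A})"
  proof (rule cycle_even_card_prefix[OF X])
    fix x assume "1 \<le> x" "x \<le> L + A"
    then show "block_flip a x \<le> L + A"
      using block_flip_l1_range[of x] by (cases "x \<le> L") (simp_all add: block_flip_a)
  qed
  then show "no_crossing P s L" "no_crossing P s (L + A)"
    using shape_set_no_crossing[OF P] even_L by blast+
  have "even (card {x\<in>X. L < x \<and> x \<le> L + A - d})"
    using cycle_even_card_symmetric[OF X, of L] n_minus_L sum_a by simp
  then have "even (card {x\<in>X. x \<le> L + A - d})"
    using even_card_prefix_iff[OF mcomponents_finite[OF comp] L_le_L_plus_A_minus_d] even_L by simp
  then show "no_crossing P s (L + A - d)" using shape_set_no_crossing[OF P] by blast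
qed

lemma collapse_image_eq:
  assumes X: "X \<in> mcomponents a"
  shows "collapse ` X = {x\<in>X. x \<le> L + A - d} \<union> (\<lambda>x. x - d) ` {x\<in>X. L + A < x}"
proof -
  have range: "x \<in> X \<Longrightarrow> 1 \<le> x \<and> x \<le> n" for x using mcomponents_subset[OF X] sum_a by auto
  have reflected: "x \<in> X \<Longrightarrow> n + 1 - x \<in> X" for x using mcomponents_theta[OF X] sum_a by simp
  have "collapse x \<in> {x\<in>X. x \<le> L + A - d} \<union> (\<lambda>x. x - d) ` {x\<in>X. L + A < x}" if x: "x \<in> X" for x
  proof -
    consider "x \<le> L" | "L < x" "x \<le> L + A" | "L + A < x" by linarith
    then show ?thesis
    proof cases
      case 2
      then have "n + 1 - x \<le> L + A - d" using n_minus_L by linarith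
      then show ?thesis using 2 collapse_mid reflected[OF x] by simp
    qed (use x collapse_low collapse_high L_le_L_plus_A_minus_d in auto)
  qed
  moreover have "y \<in> collapse ` X" if y: "y \<in> X" "y \<le> L + A - d" for y
  proof (cases "y \<le> L")
    case True
    then show ?thesis using y collapse_low by (metis image_eqI)
  next
    case False
    then have "collapse (n + 1 - y) = y"
      using collapse_mid[of "n + 1 - y"] range[OF y(1)] y(2) n_minus_L by auto
    then show ?thesis using reflected[OF y(1)] by (metis image_eqI)
  qed
  moreover have "x - d \<in> collapse ` X" if "x \<in> X" "L + A < x" for x
    using that collapse_high by (metis image_eqI)
  ultimately show ?thesis by blast
qed

definition collapse_shape :: "nat set \<Rightarrow> nat set" where
  "collapse_shape P = {p\<in>P. p \<le> L + A - d} \<union> (\<lambda>p. p - d) ` {p\<in>P. L + A < p}"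

lemma shape_set_collapse:
  assumes X: "is_cycle a X" and P: "shape_set X s P"
  shows "shape_set (collapse ` X) s (collapse_shape P)"
proof -
  have comp: "X \<in> mcomponents a" using X by (simp add: is_cycle_iff)
  note no_crossing = cycle_no_crossing_a[OF X P]
  have low: "shape_set {x\<in>X. x \<le> L + A - d} s {p\<in>P. p \<le> L + A - d}"
    by (rule shape_set_prefix[OF P no_crossing(3)])
  have "shape_set {x\<in>X. L + A < x} s {p\<in>P. L + A < p}"
    by (rule shape_set_suffix[OF P no_crossing(2)])
  then have high: "shape_set ((\<lambda>x. x - d) ` {x\<in>X. L + A < x}) s ((\<lambda>p. p - d) ` {p\<in>P. L + A < p})"
    by (rule shape_set_shift_down) (use d_le_A in auto)
  have "\<forall>x\<in>{x\<in>X. x \<le> L + A - d}. \<forall>y\<in>(\<lambda>x. x - d) ` {x\<in>X. L + A < x}. x < y"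
    using d_le_A by auto
  from shape_set_Un[OF low high this] show ?thesis
    unfolding collapse_image_eq[OF comp] collapse_shape_def .
qed

lemma cycle_no_crossing_b:
  assumes X: "is_cycle a X" and P: "shape_set (collapse ` X) s P"
  shows "no_crossing P s L" "no_crossing P s (L + A - d)" "no_crossing P s R"
proof -
  have comp: "X \<in> mcomponents a" using X by (simp add: is_cycle_iff)
  have Y: "is_cycle b (collapse ` X)" using is_cycle_image_iff[OF comp] X by simp
  have even_L: "even (card {y\<in>collapse ` X. y \<le> L})"
    by (rule cycle_even_card_prefix[OF Y]) (use block_flip_l1_range in \<open>simp add: block_flip_b\<close>)
  have even_LA: "even (card {y\<in>collapse ` X. y \<le> L + A - d})"
  proof (rule cycle_even_card_prefix[OF Y])
    fix y assume "1 \<le> y" "y \<le> L + A - d"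
    then show "block_flip b y \<le> L + A - d"
      using block_flip_l1_range[of y] d_le_A by (cases "y \<le> L") (auto simp: block_flip_b)
  qed
  then show "no_crossing P s L" "no_crossing P s (L + A - d)"
    using shape_set_no_crossing[OF P] even_L by blast+
  have "m - R = L + A - d" using m R_plus_d d_le_A by simp
  then have "even (card {y\<in>collapse ` X. R < y \<and> y \<le> L + A - d})"
    using cycle_even_card_symmetric[OF Y, of R] sum_b by simp
  then have "even (card {y\<in>collapse ` X. y \<le> R})"
    using even_card_prefix_iff[OF mcomponents_finite[OF image_mcomponents[OF comp]], of R]
      even_LA R_less_L L_le_L_plus_A_minus_d by simp
  then show "no_crossing P s R" using shape_set_no_crossing[OF P] by blast
qed

lemma collapse_image_low:
  "X \<in> mcomponents a \<Longrightarrow> {y\<in>collapse ` X. y \<le> L + A - d} = {x\<in>X. x \<le> L + A - d}"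
  unfolding collapse_image_eq using d_le_A by auto

lemma collapse_image_high:
  assumes X: "X \<in> mcomponents a"
  shows "(\<lambda>y. y + d) ` {y\<in>collapse ` X. L + A - d < y} = {x\<in>X. L + A < x}"
proof -
  have "{y\<in>collapse ` X. L + A - d < y} = (\<lambda>x. x - d) ` {x\<in>X. L + A < x}"
    unfolding collapse_image_eq[OF X] using d_le_A by auto
  moreover have "(\<lambda>x. x - d + d) ` {x\<in>X. L + A < x} = {x\<in>X. L + A < x}"
    using d_le_A by (intro image_cong_simp[THEN trans, OF refl _ image_ident]) auto
  ultimately show ?thesis by (simp add: image_image)
qed

lemma collapse_image_mid:
  assumes X: "X \<in> mcomponents a"
  shows "(\<lambda>y. n + 1 - y) ` {y\<in>collapse ` X. R < y \<and> y \<le> L} = {x\<in>X. L + A - d < x \<and> x \<le> L + A}"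
proof -
  have "{y\<in>collapse ` X. R < y \<and> y \<le> L} = {y\<in>{y\<in>collapse ` X. y \<le> L + A - d}. R < y \<and> y \<le> L}"
    using L_le_L_plus_A_minus_d by auto
  also have "\<dots> = {x\<in>X. R < x \<and> x \<le> L}"
    unfolding collapse_image_low[OF X] using L_le_L_plus_A_minus_d by auto
  finally have "(\<lambda>y. n + 1 - y) ` {y\<in>collapse ` X. R < y \<and> y \<le> L} =
      {x\<in>X. R < n + 1 - x \<and> n + 1 - x \<le> L}"
    using mcomponents_theta_image_Collect[OF X, of "\<lambda>x. R < x \<and> x \<le> L"] sum_a by simp
  also have "\<dots> = {x\<in>X. L + A - d < x \<and> x \<le> L + A}"
  proof (rule Collect_cong)
    fix x
    show "(x \<in> X \<and> R < n + 1 - x \<and> n + 1 - x \<le> L) \<longleftrightarrow> (x \<in> X \<and> L + A - d < x \<and> x \<le> L + A)"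
      using n R_plus_d d_le_A by arith
  qed
  finally show ?thesis .
qed

lemma component_eq_pieces:
  assumes X: "X \<in> mcomponents a"
  shows "X = {y\<in>collapse ` X. y \<le> L + A - d} \<union> (\<lambda>y. n + 1 - y) ` {y\<in>collapse ` X. R < y \<and> y \<le> L}
    \<union> (\<lambda>y. y + d) ` {y\<in>collapse ` X. L + A - d < y}"
  unfolding collapse_image_low[OF X] collapse_image_mid[OF X] collapse_image_high[OF X]
proof (intro equalityI subsetI)
  fix x assume "x \<in> X"
  then show "x \<in> {x\<in>X. x \<le> L + A - d} \<union> {x\<in>X. L + A - d < x \<and> x \<le> L + A} \<union> {x\<in>X. L + A < x}"
    by (cases "x \<le> L + A - d"; cases "x \<le> L + A") auto
qed auto

definition expand_shape :: "nat \<Rightarrow> nat set \<Rightarrow> nat set" where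
  "expand_shape s P = {p\<in>P. p \<le> L + A - d} \<union> (\<lambda>p. n + 1 - (p + s - 1)) ` {p\<in>P. R < p \<and> p \<le> L}
     \<union> (\<lambda>p. p + d) ` {p\<in>P. L + A - d < p}"

lemma shape_set_expand:
  assumes X: "is_cycle a X" and P: "shape_set (collapse ` X) s P"
  shows "shape_set X s (expand_shape s P)"
proof -
  have comp: "X \<in> mcomponents a" using X by (simp add: is_cycle_iff)
  note no_crossing = cycle_no_crossing_b[OF X P]
  let ?Y = "collapse ` X"
  have low: "shape_set {y\<in>?Y. y \<le> L + A - d} s {p\<in>P. p \<le> L + A - d}"
    by (rule shape_set_prefix[OF P no_crossing(2)])
  have "shape_set {y\<in>?Y. R < y \<and> y \<le> L} s {p\<in>P. R < p \<and> p \<le> L}"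
    by (rule shape_set_between[OF P no_crossing(3) no_crossing(1)])
  then have mid: "shape_set ((\<lambda>y. n + 1 - y) ` {y\<in>?Y. R < y \<and> y \<le> L}) s
      ((\<lambda>p. n + 1 - (p + s - 1)) ` {p\<in>P. R < p \<and> p \<le> L})"
    by (rule shape_set_reflect) (use R_less_L n in auto)
  have "shape_set {y\<in>?Y. L + A - d < y} s {p\<in>P. L + A - d < p}"
    by (rule shape_set_suffix[OF P no_crossing(2)])
  then have high: "shape_set ((\<lambda>y. y + d) ` {y\<in>?Y. L + A - d < y}) s
      ((\<lambda>p. p + d) ` {p\<in>P. L + A - d < p})"
    by (rule shape_set_shift_up)
  have "\<forall>x\<in>{y\<in>?Y. y \<le> L + A - d}. \<forall>y\<in>(\<lambda>y. n + 1 - y) ` {y\<in>?Y. R < y \<and> y \<le> L}. x < y"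
    using n_minus_L n by auto
  note low_mid = shape_set_Un[OF low mid this]
  have "\<forall>x\<in>{y\<in>?Y. y \<le> L + A - d} \<union> (\<lambda>y. n + 1 - y) ` {y\<in>?Y. R < y \<and> y \<le> L}.
      \<forall>y\<in>(\<lambda>y. y + d) ` {y\<in>?Y. L + A - d < y}. x < y"
    using n d_le_A R_plus_d by auto
  from shape_set_Un[OF low_mid high this] show ?thesis
    unfolding expand_shape_def using component_eq_pieces[OF comp] by simp
qed

lemma collapse_image_centre_symmetric:
  assumes X: "X \<in> mcomponents a"
  shows "(\<lambda>y. n + 1 - y) ` {y\<in>collapse ` X. L < y \<and> y \<le> L + A - d} =
    {y\<in>collapse ` X. L < y \<and> y \<le> L + A - d}"
proof -
  have eq: "{y\<in>collapse ` X. L < y \<and> y \<le> L + A - d} = {x\<in>X. L < x \<and> x \<le> L + A - d}"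
    using collapse_image_low[OF X] by auto
  have "{x\<in>X. L < n + 1 - x \<and> n + 1 - x \<le> L + A - d} = {x\<in>X. L < x \<and> x \<le> L + A - d}"
  proof (rule Collect_cong)
    fix x
    show "(x \<in> X \<and> L < n + 1 - x \<and> n + 1 - x \<le> L + A - d) \<longleftrightarrow> (x \<in> X \<and> L < x \<and> x \<le> L + A - d)"
      using n R_plus_d d_le_A by arith
  qed
  then show ?thesis
    unfolding eq using mcomponents_theta_image_Collect[OF X, of "\<lambda>x. L < x \<and> x \<le> L + A - d"] sum_a
    by simp
qed

lemma inside_witness_collapse:
  assumes X: "is_cycle a X" and Y: "Y \<in> mcomponents a" and P: "shape_set X s P" and s: "2 < s"
    and y: "y \<in> Y" and p: "p \<in> P" "p \<le> y" "y \<le> p + s - 1"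
  shows "\<exists>y'\<in>collapse ` Y. \<exists>p'\<in>collapse_shape P. p' \<le> y' \<and> y' \<le> p' + s - 1"
proof -
  have comp: "X \<in> mcomponents a" using X by (simp add: is_cycle_iff)
  note no_crossing = cycle_no_crossing_a[OF X P]
  have "p + s - 1 \<in> X" using P p by (auto simp: shape_set_def)
  then have p_end: "p + s - 1 \<le> n" using mcomponents_subset[OF comp] sum_a by auto
  consider "y \<le> L" | "L < y" "y \<le> L + A" | "L + A < y" by linarith
  then show ?thesis
  proof cases
    case 1
    then have "p \<in> collapse_shape P"
      using p L_le_L_plus_A_minus_d by (auto simp: collapse_shape_def)
    then show ?thesis using 1 p y collapse_low by (metis image_eqI)
  next
    case 2
    have "L < p" using no_crossing(1) p 2 unfolding no_crossing_def by force
    have "(\<lambda>x. n + 1 - x) ` X = X" using mcomponents_theta_image[OF comp] sum_a by simp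
    moreover have "\<forall>z\<in>X. z \<le> n + 1" using mcomponents_subset[OF comp] sum_a by auto
    ultimately have "n + 1 - (p + s - 1) \<in> P" by (rule shape_set_reflect_closed[OF P _ _ p(1)])
    moreover have "n + 1 - (p + s - 1) \<le> L + A - d" using \<open>L < p\<close> s n_minus_L p_end by linarith
    ultimately have "n + 1 - (p + s - 1) \<in> collapse_shape P" by (auto simp: collapse_shape_def)
    moreover have "n + 1 - (p + s - 1) \<le> collapse y" "collapse y \<le> n + 1 - (p + s - 1) + s - 1"
      using collapse_mid[OF 2] p p_end s by linarith+
    ultimately show ?thesis using y by blast
  next
    case 3
    have "L + A < p" using no_crossing(2) p 3 unfolding no_crossing_def by force
    then have "p - d \<in> collapse_shape P" using p by (auto simp: collapse_shape_def)
    moreover have "p - d \<le> collapse y" "collapse y \<le> p - d + s - 1"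
      using collapse_high[OF 3] p \<open>L + A < p\<close> d_le_A s by linarith+
    ultimately show ?thesis using y by blast
  qed
qed

lemma inside_witness_expand:
  assumes X: "is_cycle a X" and Y: "Y \<in> mcomponents a" and P: "shape_set (collapse ` X) s P"
    and s: "2 < s" and y: "y \<in> collapse ` Y" and p: "p \<in> P" "p \<le> y" "y \<le> p + s - 1"
  shows "\<exists>y'\<in>Y. \<exists>p'\<in>expand_shape s P. p' \<le> y' \<and> y' \<le> p' + s - 1"
proof -
  have comp: "X \<in> mcomponents a" using X by (simp add: is_cycle_iff)
  note no_crossing = cycle_no_crossing_b[OF X P]
  have expand_y: "expand y \<in> Y" using h_mcomponents[OF Y y] .
  consider "y \<le> L" | "L < y" "y \<le> L + A - d" | "L + A - d < y" by linarith
  then show ?thesis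
  proof cases
    case 1
    then have "p \<in> expand_shape s P" using p L_le_L_plus_A_minus_d by (auto simp: expand_shape_def)
    then show ?thesis using 1 p expand_y expand_low by metis
  next
    case 2
    have "L < p" using no_crossing(1) p 2 unfolding no_crossing_def by force
    have p_end: "p + s - 1 \<le> L + A - d" using no_crossing(2) p 2 unfolding no_crossing_def by auto
    have centre: "shape_set {y\<in>collapse ` X. L < y \<and> y \<le> L + A - d} s {p\<in>P. L < p \<and> p \<le> L + A - d}"
      by (rule shape_set_between[OF P no_crossing(1) no_crossing(2)])
    have "\<forall>z\<in>{y\<in>collapse ` X. L < y \<and> y \<le> L + A - d}. z \<le> n + 1" using n_minus_L by auto
    with centre collapse_image_centre_symmetric[OF comp]
    have "n + 1 - (p + s - 1) \<in> {p\<in>P. L < p \<and> p \<le> L + A - d}"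
      by (rule shape_set_reflect_closed) (use p \<open>L < p\<close> 2 in auto)
    then have "n + 1 - (p + s - 1) \<in> expand_shape s P" by (auto simp: expand_shape_def)
    moreover have "n + 1 - (p + s - 1) \<le> expand y" "expand y \<le> n + 1 - (p + s - 1) + s - 1"
      using expand_mid[OF 2] p p_end n_minus_L s by linarith+
    ultimately show ?thesis using expand_y by blast
  next
    case 3
    have "L + A - d < p" using no_crossing(2) p 3 unfolding no_crossing_def by force
    then have "p + d \<in> expand_shape s P" using p by (auto simp: expand_shape_def)
    moreover have "p + d \<le> expand y" "expand y \<le> p + d + s - 1"
      using expand_high[OF 3] p s by linarith+
    ultimately show ?thesis using expand_y by blast
  qed
qed

lemma inside_image_iff:
  assumes X: "X \<in> mcomponents a" and Y: "Y \<in> mcomponents a"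
  shows "inside b (collapse ` Y) (collapse ` X) \<longleftrightarrow> inside a Y X"
proof -
  have "(\<exists>s P. shape_set (collapse ` X) s P \<and> 2 < s \<and>
          (\<exists>y\<in>collapse ` Y. \<exists>p\<in>P. p \<le> y \<and> y \<le> p + s - 1)) \<longleftrightarrow>
        (\<exists>s P. shape_set X s P \<and> 2 < s \<and> (\<exists>y\<in>Y. \<exists>p\<in>P. p \<le> y \<and> y \<le> p + s - 1))"
    if cycle: "is_cycle a X"
  proof
    assume "\<exists>s P. shape_set (collapse ` X) s P \<and> 2 < s \<and>
      (\<exists>y\<in>collapse ` Y. \<exists>p\<in>P. p \<le> y \<and> y \<le> p + s - 1)"
    then obtain s P y p where P: "shape_set (collapse ` X) s P" and s: "2 < s"
      and witness: "y \<in> collapse ` Y" "p \<in> P" "p \<le> y" "y \<le> p + s - 1" by blast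
    note shape_set_expand[OF cycle P] inside_witness_expand[OF cycle Y P s witness]
    then show "\<exists>s P. shape_set X s P \<and> 2 < s \<and> (\<exists>y\<in>Y. \<exists>p\<in>P. p \<le> y \<and> y \<le> p + s - 1)"
      using s by blast
  next
    assume "\<exists>s P. shape_set X s P \<and> 2 < s \<and> (\<exists>y\<in>Y. \<exists>p\<in>P. p \<le> y \<and> y \<le> p + s - 1)"
    then obtain s P y p where P: "shape_set X s P" and s: "2 < s"
      and witness: "y \<in> Y" "p \<in> P" "p \<le> y" "y \<le> p + s - 1" by blast
    note shape_set_collapse[OF cycle P] inside_witness_collapse[OF cycle Y P s witness]
    then show "\<exists>s P. shape_set (collapse ` X) s P \<and> 2 < s \<and>
        (\<exists>y\<in>collapse ` Y. \<exists>p\<in>P. p \<le> y \<and> y \<le> p + s - 1)"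
      using s by blast
  qed
  then show ?thesis
    unfolding inside_iff using is_cycle_image_iff[OF X] image_eq_iff[OF X Y]
      image_mcomponents[OF Y] Y by blast
qed

lemma meander_equiv_a_b: "meander_equiv a b"
proof (rule meander_equivI[OF bij_betw_image_mcomponents])
  show "is_cycle b (collapse ` X) \<longleftrightarrow> is_cycle a X" if "X \<in> mcomponents a" for X
    using is_cycle_image_iff[OF that] .
  show "(\<exists>xs. cycle_shape (collapse ` X) s xs) \<longleftrightarrow> (\<exists>xs. cycle_shape X s xs)"
    if "is_cycle a X" for X s
    unfolding ex_cycle_shape_iff
    using shape_set_collapse[OF that] shape_set_expand[OF that] by blast
  show "inside b (collapse ` Y) (collapse ` X) \<longleftrightarrow> inside a Y X"
    if "X \<in> mcomponents a" "Y \<in> mcomponents a" for X Y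
    using inside_image_iff[OF that] .
qed

end

abbreviation gap :: "nat list \<Rightarrow> nat list \<Rightarrow> nat" where
  "gap l1 l2 \<equiv> nat \<bar>int (sum_list l1) - int (sum_list l2)\<bar>"

lemma meander_equiv_subtract_gap_less:
  assumes "sum_list l2 < sum_list l1" "gap l1 l2 \<le> A"
  shows "meander_equiv (l1 @ A # l2) (l1 @ (A - gap l1 l2) # l2)"
proof -
  interpret reduction_step l1 l2 A "sum_list l1" "sum_list l2" "gap l1 l2"
    "sum_list l1 + A + sum_list l2" "sum_list l1 + (A - gap l1 l2) + sum_list l2"
    using assms by unfold_locales auto
  show ?thesis using meander_equiv_a_b unfolding a_def b_def .
qed

lemma meander_equiv_subtract_gap:
  assumes "sum_list l1 \<noteq> sum_list l2" "gap l1 l2 \<le> A"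
  shows "meander_equiv (l1 @ A # l2) (l1 @ (A - gap l1 l2) # l2)"
proof (cases "sum_list l2 < sum_list l1")
  case True
  then show ?thesis using meander_equiv_subtract_gap_less assms(2) by blast
next
  case False
  then have "sum_list (rev l1) < sum_list (rev l2)" "gap (rev l2) (rev l1) = gap l1 l2"
    using assms(1) by (simp_all add: sum_list_rev)
  then have "meander_equiv (rev l2 @ A # rev l1) (rev l2 @ (A - gap l1 l2) # rev l1)"
    using meander_equiv_subtract_gap_less[of "rev l1" "rev l2" A] assms(2) by simp
  then show ?thesis
    using meander_equiv_rev[of "l1 @ A # l2"] meander_equiv_rev[of "l1 @ (A - gap l1 l2) # l2"]
    by (auto intro: meander_equiv_trans meander_equiv_sym)
qed

lemma meander_equiv_mod_gap:
  assumes "sum_list l1 \<noteq> sum_list l2"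
  shows "meander_equiv (l1 @ A # l2) (l1 @ (A mod gap l1 l2) # l2)"
proof (induction A rule: less_induct)
  case (less A)
  show ?case
  proof (cases "A < gap l1 l2")
    case True
    then show ?thesis using meander_equiv_refl by simp
  next
    case False
    then have "meander_equiv (l1 @ A # l2) (l1 @ (A - gap l1 l2) # l2)"
      using meander_equiv_subtract_gap assms by simp
    moreover have "meander_equiv (l1 @ (A - gap l1 l2) # l2) (l1 @ (A mod gap l1 l2) # l2)"
      using less[of "A - gap l1 l2"] False assms by (simp add: le_mod_geq)
    ultimately show ?thesis by (rule meander_equiv_trans)
  qed
qed

lemma meander_equiv_filter_nonzero: "meander_equiv a (filter (\<lambda>x. x \<noteq> 0) a)"
  using sum_list_map_filter[of a "\<lambda>x. x \<noteq> 0" id]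
  by (intro meander_equiv_if_block_flip_eq[OF block_flip_filter_nonzero[symmetric]]) simp

theorem mainTheorem18:
  fixes a :: "nat list" and i :: nat
  assumes "is_composition a"
    and "i < length a"
    and "dval a i \<noteq> 0"
  shows "meander_equiv a (reduce_comp a i)"
proof -
  define l1 l2 where "l1 = take i a" and "l2 = drop (Suc i) a"
  have a: "a = l1 @ a ! i # l2" unfolding l1_def l2_def using id_take_nth_drop[OF assms(2)] .
  have "\<bar>dval a i\<bar> = \<bar>int (sum_list l1) - int (sum_list l2)\<bar>"
    using assms(2) by (auto simp: dval_def l1_def l2_def)
  then have ne: "sum_list l1 \<noteq> sum_list l2" and "nat \<bar>dval a i\<bar> = gap l1 l2"
    using assms(3) by auto
  then have "reduce_comp a i = filter (\<lambda>x. x \<noteq> 0) (l1 @ (a ! i mod gap l1 l2) # l2)"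
    unfolding reduce_comp_def l1_def l2_def using upd_conv_take_nth_drop[OF assms(2)] by simp
  then show ?thesis
    using meander_equiv_mod_gap[OF ne, of "a ! i"] meander_equiv_filter_nonzero a
    by (metis meander_equiv_trans)
qed

end
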